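(* Let $L$ be a semiprime right Leibniz algebra and let $Q(L)$ be the Leibniz algebra of equivalence classes of partial derivations on essential ideals described in the context, with $L$ embedded via $\varphi(x)=(R_x)_L$. Then $Q(L)$ is semiprime and is an algebra of quotients of $L$ (i.e., of $\varphi(L)$). Moreover, $Q(L)$ is maximal among the algebras of quotients of $L$: if $S$ is an algebra of quotients of $L$, then the map $\psi:S\to Q(L)$, $s\mapsto (R_s)_{(L:s)}$ (where $R_s(x)=[x,s]$ for $x\in(L:s)$) is a monomorphism which is the identity when restricted to $L$ (i.e., $\psi(x)=\varphi(x)$ for $x\in L$).
   Context: A right Leibniz algebra satisfies $[x,[y,z]]=[[x,y],z]-[[x,z],y]$. Ideals are subspaces $I$ with $[I,L]\subseteq I$, $[L,I]\subseteq I$; $I^2$ is the span of $[x,y]$, $x,y\in I$. $L$ is semiprime if $[I,I]\ne\{0\}$ for every nonzero ideal $I$. An ideal is essential if it meets every nonzero ideal nontrivially; $\mathscr{J}_e(L)$ denotes the set of essential ideals. $\mathrm{PDer}(I,L)$ is the set of linear maps $\delta:I\to L$ with $\delta([x,y])=[\delta(x),y]+[x,\delta(y)]$. $Q(L)$ is the set of pairs $(\delta,I)$, $I\in\mathscr{J}_e(L)$, $\delta\in\mathrm{PDer}(I,L)$, modulo $(\delta,I)\equiv(\mu,J)$ iff $\delta,\mu$ agree on some $K\in\mathscr{J}_e(L)$ with $K\subseteq I\cap J$; the class is written $\delta_I$, with operations $p\delta_I=(p\delta)_I$, $(p\delta)(y)=\delta(py)$, $\delta_I+\mu_J=(\delta+\mu)_{I\cap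 J}$, $[\delta_I,\mu_J]=[\delta,\mu]_{(I\cap J)^2}$ with $[\delta,\mu](x)=\mu\delta(x)-\delta\mu(x)$; $\varphi(x)=(R_x)_L$ with $R_x(y)=[y,x]$. For a Leibniz algebra $S$ containing $L$ as subalgebra and $s\in S$: for $x\in L$ let $R_x,L_x$ act on $S$ by $R_x(u)=[u,x]$, $L_x(u)=[x,u]$, $\mathscr{A}(L)$ the associative algebra generated by them, ${}_L(s)=\mathbb{F}s+\{\sum\xi_i(s):\xi_i\in\mathscr{A}(L)\}$, $(L:s)=\{x\in L:[x,{}_L(s)]\subseteq L,[{}_L(s),x]\subseteq L\}$. $S$ is an algebra of quotients of $L$ if for all $p,q\in S$, $p\ne0$, there is $x\in(L:q)$ with $[x,p]\ne0$ or $y\in(L:q)$ with $[p,y]\ne0$. *)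

theory Defs
  imports Main
begin

record ('f, 'a) lalg =
  lcar  :: "'a set"
  ladd  :: "'a \<Rightarrow> 'a \<Rightarrow> 'a"
  lzero :: "'a"
  lsmul :: "'f \<Rightarrow> 'a \<Rightarrow> 'a"
  lbr   :: "'a \<Rightarrow> 'a \<Rightarrow> 'a"

definition lsub :: "('f::field, 'a) lalg \<Rightarrow> 'a \<Rightarrow> 'a \<Rightarrow> 'a" where
  "lsub A x y = ladd A x (lsmul A (-1) y)"

definition vspace :: "('f::field, 'a) lalg \<Rightarrow> bool" where
  "vspace A \<longleftrightarrow>
     lzero A \<in> lcar A \<and>
     (\<forall>x\<in>lcar A. \<forall>y\<in>lcar A. ladd A x y \<in> lcar A) \<and>
     (\<forall>c. \<forall>x\<in>lcar A. lsmul A c x \<in> lcar A) \<and>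
     (\<forall>x\<in>lcar A. \<forall>y\<in>lcar A. \<forall>z\<in>lcar A. ladd A (ladd A x y) z = ladd A x (ladd A y z)) \<and>
     (\<forall>x\<in>lcar A. \<forall>y\<in>lcar A. ladd A x y = ladd A y x) \<and>
     (\<forall>x\<in>lcar A. ladd A (lzero A) x = x) \<and>
     (\<forall>x\<in>lcar A. ladd A x (lsmul A (-1) x) = lzero A) \<and>
     (\<forall>x\<in>lcar A. lsmul A 1 x = x) \<and>
     (\<forall>a b. \<forall>x\<in>lcar A. lsmul A (a * b) x = lsmul A a (lsmul A b x)) \<and>
     (\<forall>a b. \<forall>x\<in>lcar A. lsmul A (a + b) x = ladd A (lsmul A a x) (lsmul A b x)) \<and>
     (\<forall>a. \<forall>x\<in>lcar A. \<forall>y\<in>lcar A. lsmul A a (ladd A x y) = ladd A (lsmul A a x) (lsmul A a y))"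

definition leibniz :: "('f::field, 'a) lalg \<Rightarrow> bool" where
  "leibniz A \<longleftrightarrow> vspace A \<and>
     (\<forall>x\<in>lcar A. \<forall>y\<in>lcar A. lbr A x y \<in> lcar A) \<and>
     (\<forall>x\<in>lcar A. \<forall>y\<in>lcar A. \<forall>z\<in>lcar A.
        lbr A (ladd A x y) z = ladd A (lbr A x z) (lbr A y z) \<and>
        lbr A x (ladd A y z) = ladd A (lbr A x y) (lbr A x z)) \<and>
     (\<forall>c. \<forall>x\<in>lcar A. \<forall>y\<in>lcar A.
        lbr A (lsmul A c x) y = lsmul A c (lbr A x y) \<and>
        lbr A x (lsmul A c y) = lsmul A c (lbr A x y)) \<and>
     (\<forall>x\<in>lcar A. \<forall>y\<in>lcar A. \<forall>z\<in>lcar A.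
        lbr A x (lbr A y z) = lsub A (lbr A (lbr A x y) z) (lbr A (lbr A x z) y))"

definition subspace :: "('f::field, 'a) lalg \<Rightarrow> 'a set \<Rightarrow> bool" where
  "subspace A V \<longleftrightarrow> V \<subseteq> lcar A \<and> lzero A \<in> V \<and>
     (\<forall>x\<in>V. \<forall>y\<in>V. ladd A x y \<in> V) \<and> (\<forall>c. \<forall>x\<in>V. lsmul A c x \<in> V)"

definition subalgebra :: "('f::field, 'a) lalg \<Rightarrow> 'a set \<Rightarrow> bool" where
  "subalgebra A V \<longleftrightarrow> subspace A V \<and> (\<forall>x\<in>V. \<forall>y\<in>V. lbr A x y \<in> V)"

definition ideal :: "('f::field, 'a) lalg \<Rightarrow> 'a set \<Rightarrow> bool" where
  "ideal A I \<longleftrightarrow> subspace A I \<and>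
     (\<forall>x\<in>I. \<forall>y\<in>lcar A. lbr A x y \<in> I \<and> lbr A y x \<in> I)"

definition lspan :: "('f::field, 'a) lalg \<Rightarrow> 'a set \<Rightarrow> 'a set" where
  "lspan A X = \<Inter>{V. subspace A V \<and> X \<subseteq> V}"

definition isq :: "('f::field, 'a) lalg \<Rightarrow> 'a set \<Rightarrow> 'a set" where
  "isq A I = lspan A {lbr A x y | x y. x \<in> I \<and> y \<in> I}"

definition semiprime :: "('f::field, 'a) lalg \<Rightarrow> bool" where
  "semiprime A \<longleftrightarrow> (\<forall>I. ideal A I \<and> I \<noteq> {lzero A} \<longrightarrow>
      {lbr A x y | x y. x \<in> I \<and> y \<in> I} \<noteq> {lzero A})"

definition essential :: "('f::field, 'a) lalg \<Rightarrow> 'a set \<Rightarrow> bool" where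
  "essential A I \<longleftrightarrow> ideal A I \<and>
     (\<forall>J. ideal A J \<and> J \<noteq> {lzero A} \<longrightarrow> I \<inter> J \<noteq> {lzero A})"

text \<open>Partial derivations I \<rightarrow> L (only the values on I matter).\<close>

definition PDer :: "('f::field, 'a) lalg \<Rightarrow> 'a set \<Rightarrow> ('a \<Rightarrow> 'a) \<Rightarrow> bool" where
  "PDer A I d \<longleftrightarrow>
     (\<forall>x\<in>I. d x \<in> lcar A) \<and>
     (\<forall>x\<in>I. \<forall>y\<in>I. d (ladd A x y) = ladd A (d x) (d y)) \<and>
     (\<forall>c. \<forall>x\<in>I. d (lsmul A c x) = lsmul A c (d x)) \<and>
     (\<forall>x\<in>I. \<forall>y\<in>I. d (lbr A x y) = ladd A (lbr A (d x) y) (lbr A x (d y)))"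

definition Qpairs :: "('f::field, 'a) lalg \<Rightarrow> (('a \<Rightarrow> 'a) \<times> 'a set) set" where
  "Qpairs A = {(d, I). essential A I \<and> PDer A I d}"

definition Qrel :: "('f::field, 'a) lalg \<Rightarrow> ((('a \<Rightarrow> 'a) \<times> 'a set) \<times> (('a \<Rightarrow> 'a) \<times> 'a set)) set" where
  "Qrel A = {((d, I), (m, J)). (d, I) \<in> Qpairs A \<and> (m, J) \<in> Qpairs A \<and>
      (\<exists>K. essential A K \<and> K \<subseteq> I \<inter> J \<and> (\<forall>x\<in>K. d x = m x))}"

definition qclass :: "('f::field, 'a) lalg \<Rightarrow> ('a \<Rightarrow> 'a) \<Rightarrow> 'a set \<Rightarrow> (('a \<Rightarrow> 'a) \<times> 'a set) set" where
  "qclass A d I = Qrel A `` {(d, I)}"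

definition qrep :: "(('a \<Rightarrow> 'a) \<times> 'a set) set \<Rightarrow> ('a \<Rightarrow> 'a) \<times> 'a set" where
  "qrep q = (SOME p. p \<in> q)"

definition qadd :: "('f::field, 'a) lalg \<Rightarrow> _ \<Rightarrow> _ \<Rightarrow> _" where
  "qadd A q r = (case qrep q of (d, I) \<Rightarrow> case qrep r of (m, J) \<Rightarrow>
      qclass A (\<lambda>x. ladd A (d x) (m x)) (I \<inter> J))"

definition qsmul :: "('f::field, 'a) lalg \<Rightarrow> 'f \<Rightarrow> _ \<Rightarrow> _" where
  "qsmul A c q = (case qrep q of (d, I) \<Rightarrow> qclass A (\<lambda>y. d (lsmul A c y)) I)"

definition qzero :: "('f::field, 'a) lalg \<Rightarrow> _" where
  "qzero A = qclass A (\<lambda>x. lzero A) (lcar A)"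

definition qbr :: "('f::field, 'a) lalg \<Rightarrow> _ \<Rightarrow> _ \<Rightarrow> _" where
  "qbr A q r = (case qrep q of (d, I) \<Rightarrow> case qrep r of (m, J) \<Rightarrow>
      qclass A (\<lambda>x. lsub A (m (d x)) (d (m x))) (isq A (I \<inter> J)))"

definition Qalg :: "('f::field, 'a) lalg \<Rightarrow> ('f, (('a \<Rightarrow> 'a) \<times> 'a set) set) lalg" where
  "Qalg A = \<lparr> lcar = Qpairs A // Qrel A, ladd = qadd A, lzero = qzero A,
              lsmul = qsmul A, lbr = qbr A \<rparr>"

definition phi :: "('f::field, 'a) lalg \<Rightarrow> 'a \<Rightarrow> (('a \<Rightarrow> 'a) \<times> 'a set) set" where
  "phi A x = qclass A (\<lambda>y. lbr A y x) (lcar A)"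

inductive_set assoc_gen :: "('f::field, 's) lalg \<Rightarrow> 's set \<Rightarrow> ('s \<Rightarrow> 's) set"
  for S :: "('f, 's) lalg" and Lsub :: "'s set" where
  gen_R: "x \<in> Lsub \<Longrightarrow> (\<lambda>u. lbr S u x) \<in> assoc_gen S Lsub"
| gen_L: "x \<in> Lsub \<Longrightarrow> (\<lambda>u. lbr S x u) \<in> assoc_gen S Lsub"
| gen_add: "f \<in> assoc_gen S Lsub \<Longrightarrow> g \<in> assoc_gen S Lsub \<Longrightarrow>
            (\<lambda>u. ladd S (f u) (g u)) \<in> assoc_gen S Lsub"
| gen_smul: "f \<in> assoc_gen S Lsub \<Longrightarrow> (\<lambda>u. lsmul S c (f u)) \<in> assoc_gen S Lsub"
| gen_comp: "f \<in> assoc_gen S Lsub \<Longrightarrow> g \<in> assoc_gen S Lsub \<Longrightarrow> f \<circ> g \<in> assoc_gen S Lsub"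

text \<open>_L(s) = F s + { \<Sum> xi_i(s) }  (sums of the xi_i lie again in the algebra).\<close>

definition gen_sub :: "('f::field, 's) lalg \<Rightarrow> 's set \<Rightarrow> 's \<Rightarrow> 's set" where
  "gen_sub S Lsub s = {ladd S (lsmul S c s) (xi s) | c xi. xi \<in> assoc_gen S Lsub}"

definition colon :: "('f::field, 's) lalg \<Rightarrow> 's set \<Rightarrow> 's \<Rightarrow> 's set" where
  "colon S Lsub s = {x \<in> Lsub. \<forall>u\<in>gen_sub S Lsub s. lbr S x u \<in> Lsub \<and> lbr S u x \<in> Lsub}"

definition alg_of_quotients :: "('f::field, 's) lalg \<Rightarrow> 's set \<Rightarrow> bool" where
  "alg_of_quotients S Lsub \<longleftrightarrow> leibniz S \<and> subalgebra S Lsub \<and>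
     (\<forall>p\<in>lcar S. \<forall>q\<in>lcar S. p \<noteq> lzero S \<longrightarrow>
        (\<exists>x\<in>colon S Lsub q. lbr S x p \<noteq> lzero S) \<or>
        (\<exists>y\<in>colon S Lsub q. lbr S p y \<noteq> lzero S))"

definition lhom :: "('f::field, 'a) lalg \<Rightarrow> ('f, 'b) lalg \<Rightarrow> ('a \<Rightarrow> 'b) \<Rightarrow> bool" where
  "lhom A B f \<longleftrightarrow> (\<forall>x\<in>lcar A. f x \<in> lcar B) \<and>
     (\<forall>x\<in>lcar A. \<forall>y\<in>lcar A. f (ladd A x y) = ladd B (f x) (f y)) \<and>
     (\<forall>c. \<forall>x\<in>lcar A. f (lsmul A c x) = lsmul B c (f x)) \<and>
     (\<forall>x\<in>lcar A. \<forall>y\<in>lcar A. f (lbr A x y) = lbr B (f x) (f y))"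

definition lmono :: "('f::field, 'a) lalg \<Rightarrow> ('f, 'b) lalg \<Rightarrow> ('a \<Rightarrow> 'b) \<Rightarrow> bool" where
  "lmono A B f \<longleftrightarrow> lhom A B f \<and> inj_on f (lcar A)"

definition psi :: "('f::field, 'a) lalg \<Rightarrow> ('f, 's) lalg \<Rightarrow> ('a \<Rightarrow> 's) \<Rightarrow> 's
                   \<Rightarrow> (('a \<Rightarrow> 'a) \<times> 'a set) set" where
  "psi A S emb s = qclass A (\<lambda>x. inv_into (lcar A) emb (lbr S (emb x) s))
      {x \<in> lcar A. emb x \<in> colon S (emb ` lcar A) s}"

end

theory Submission
  imports Defs
begin

text \<open>Semiprimeness makes partial derivations rigid: an element annihilated by an essential
  ideal is zero, so two partial derivations that agree on an essential ideal agree on their whole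
  common domain, and the square of an essential ideal is again essential. Hence the operations on
  classes are well defined, and each identity of a right Leibniz algebra can be checked pointwise
  on a suitable iterated square of the intersection of the domains, which is essential.
  The algebra \<open>L\<close> embeds through right multiplications; bracketing a class with \<open>\<phi>(L)\<close> keeps
  its domain \<open>I\<close>, so \<open>\<phi>(I)\<close> lies in \<open>(\<phi>(L) : q)\<close>, which yields the quotient property.
  For an algebra of quotients \<open>S\<close>, right multiplication by \<open>s\<close>, pulled back to \<open>L\<close>, is a partial
  derivation on the essential ideal \<open>(L : s)\<close>; \<open>\<psi>\<close> is a homomorphism by the Leibniz identity in
  \<open>S\<close>, and injective because no nonzero element of \<open>S\<close> is annihilated by an essential ideal of
  \<open>L\<close>.\<close>

section \<open>Right Leibniz algebras, ideals and partial derivations\<close>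

locale leibniz_algebra =
  fixes A :: "('f::field, 'a) lalg"
  assumes leibniz: "leibniz A"
begin

abbreviation carr where "carr \<equiv> lcar A"
abbreviation aplus (infixl "\<oplus>" 65) where "x \<oplus> y \<equiv> ladd A x y"
abbreviation ascale (infixr "\<odot>" 75) where "c \<odot> x \<equiv> lsmul A c x"
abbreviation aminus (infixl "\<ominus>" 65) where "x \<ominus> y \<equiv> lsub A x y"
abbreviation abr (infixl "\<star>" 70) where "x \<star> y \<equiv> lbr A x y"
abbreviation azero ("\<zero>") where "\<zero> \<equiv> lzero A"
abbreviation aneg where "aneg x \<equiv> lsmul A (-1) x"

lemma vspace: "vspace A"
  using leibniz unfolding leibniz_def by auto

lemma zero_closed [simp]: "\<zero> \<in> carr"
  and add_closed [simp]: "x \<in> carr \<Longrightarrow> y \<in> carr \<Longrightarrow> x \<oplus> y \<in> carr"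
  and smul_closed [simp]: "x \<in> carr \<Longrightarrow> c \<odot> x \<in> carr"
  and add_assoc: "x \<in> carr \<Longrightarrow> y \<in> carr \<Longrightarrow> z \<in> carr \<Longrightarrow> x \<oplus> y \<oplus> z = x \<oplus> (y \<oplus> z)"
  and add_commute: "x \<in> carr \<Longrightarrow> y \<in> carr \<Longrightarrow> x \<oplus> y = y \<oplus> x"
  and add_zero_left [simp]: "x \<in> carr \<Longrightarrow> \<zero> \<oplus> x = x"
  and add_neg_right [simp]: "x \<in> carr \<Longrightarrow> x \<oplus> aneg x = \<zero>"
  and smul_one [simp]: "x \<in> carr \<Longrightarrow> 1 \<odot> x = x"
  and smul_smul: "x \<in> carr \<Longrightarrow> a \<odot> b \<odot> x = (a * b) \<odot> x"
  and smul_add_scalar: "x \<in> carr \<Longrightarrow> (a + b) \<odot> x = a \<odot> x \<oplus> b \<odot> x"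
  and smul_add: "x \<in> carr \<Longrightarrow> y \<in> carr \<Longrightarrow> a \<odot> (x \<oplus> y) = a \<odot> x \<oplus> a \<odot> y"
  using vspace unfolding vspace_def by auto

lemma bracket_closed [simp]: "x \<in> carr \<Longrightarrow> y \<in> carr \<Longrightarrow> x \<star> y \<in> carr"
  and bracket_add_left: "x \<in> carr \<Longrightarrow> y \<in> carr \<Longrightarrow> z \<in> carr \<Longrightarrow> (x \<oplus> y) \<star> z = x \<star> z \<oplus> y \<star> z"
  and bracket_add_right: "x \<in> carr \<Longrightarrow> y \<in> carr \<Longrightarrow> z \<in> carr \<Longrightarrow> x \<star> (y \<oplus> z) = x \<star> y \<oplus> x \<star> z"
  and bracket_smul_left: "x \<in> carr \<Longrightarrow> y \<in> carr \<Longrightarrow> (c \<odot> x) \<star> y = c \<odot> (x \<star> y)"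
  and bracket_smul_right: "x \<in> carr \<Longrightarrow> y \<in> carr \<Longrightarrow> x \<star> (c \<odot> y) = c \<odot> (x \<star> y)"
  and leibniz_identity:
    "x \<in> carr \<Longrightarrow> y \<in> carr \<Longrightarrow> z \<in> carr \<Longrightarrow> x \<star> (y \<star> z) = (x \<star> y) \<star> z \<ominus> (x \<star> z) \<star> y"
  using leibniz unfolding leibniz_def by auto

lemma diff_conv_add_neg: "x \<ominus> y = x \<oplus> aneg y"
  by (simp add: lsub_def)

lemma diff_closed [simp]: "x \<in> carr \<Longrightarrow> y \<in> carr \<Longrightarrow> x \<ominus> y \<in> carr"
  by (simp add: diff_conv_add_neg)

lemma add_left_commute: "x \<in> carr \<Longrightarrow> y \<in> carr \<Longrightarrow> z \<in> carr \<Longrightarrow> x \<oplus> (y \<oplus> z) = y \<oplus> (x \<oplus> z)"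
  by (metis add_assoc add_commute)

lemmas add_ac = add_assoc add_commute add_left_commute

lemma add_zero_right [simp]: "x \<in> carr \<Longrightarrow> x \<oplus> \<zero> = x"
  by (metis add_zero_left add_commute zero_closed)

lemma add_neg_left [simp]: "x \<in> carr \<Longrightarrow> aneg x \<oplus> x = \<zero>"
  by (metis add_neg_right add_commute smul_closed)

lemma add_neg_cancel_left [simp]: "x \<in> carr \<Longrightarrow> y \<in> carr \<Longrightarrow> x \<oplus> (aneg x \<oplus> y) = y"
  and neg_add_cancel_left [simp]: "x \<in> carr \<Longrightarrow> y \<in> carr \<Longrightarrow> aneg x \<oplus> (x \<oplus> y) = y"
  by (simp_all flip: add_assoc)

lemma add_left_cancel:
  assumes "a \<in> carr" "b \<in> carr" "c \<in> carr" "a \<oplus> b = a \<oplus> c"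
  shows "b = c"
  by (metis assms neg_add_cancel_left)

lemma add_right_cancel:
  assumes "a \<in> carr" "b \<in> carr" "c \<in> carr" "b \<oplus> a = c \<oplus> a"
  shows "b = c"
  using add_left_cancel[of a b c] assms by (simp add: add_commute)

lemma smul_zero_scalar [simp]: "x \<in> carr \<Longrightarrow> 0 \<odot> x = \<zero>"
  by (metis add_left_cancel add_zero_right add_0 smul_add_scalar smul_closed zero_closed)

lemma smul_zero [simp]: "c \<odot> \<zero> = \<zero>"
  by (metis mult_zero_right smul_smul smul_zero_scalar zero_closed)

lemma neg_neg [simp]: "x \<in> carr \<Longrightarrow> aneg (aneg x) = x"
  by (simp add: smul_smul)

lemma neg_add: "x \<in> carr \<Longrightarrow> y \<in> carr \<Longrightarrow> aneg (x \<oplus> y) = aneg x \<oplus> aneg y"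
  by (simp add: smul_add)

lemma eq_diff_iff:
  assumes "a \<in> carr" "b \<in> carr" "c \<in> carr"
  shows "a = b \<ominus> c \<longleftrightarrow> a \<oplus> c = b"
  using assms by (metis add_assoc add_neg_left add_neg_right add_zero_right diff_conv_add_neg smul_closed)

lemma diff_eq_diff_iff:
  assumes "a \<in> carr" "b \<in> carr" "c \<in> carr" "d \<in> carr"
  shows "a \<ominus> b = c \<ominus> d \<longleftrightarrow> a \<oplus> d = c \<oplus> b"
proof -
  have "a \<ominus> b = c \<ominus> d \<longleftrightarrow> a \<ominus> b \<oplus> d = c"
    using assms eq_diff_iff by (metis diff_closed)
  also have "\<dots> \<longleftrightarrow> c = a \<oplus> d \<ominus> b"
    using assms by (auto simp: diff_conv_add_neg add_ac)
  also have "\<dots> \<longleftrightarrow> c \<oplus> b = a \<oplus> d"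
    using assms eq_diff_iff by simp
  finally show ?thesis by auto
qed

lemma diff_self [simp]: "x \<in> carr \<Longrightarrow> x \<ominus> x = \<zero>"
  by (simp add: diff_conv_add_neg)

lemma diff_eq_zero_imp_eq: "x \<in> carr \<Longrightarrow> y \<in> carr \<Longrightarrow> x \<ominus> y = \<zero> \<Longrightarrow> x = y"
  using eq_diff_iff[of "\<zero>" x y] by simp

lemma add_eq_zero_imp_eq_neg: "x \<in> carr \<Longrightarrow> y \<in> carr \<Longrightarrow> x \<oplus> y = \<zero> \<Longrightarrow> x = aneg y"
  by (metis add_right_cancel add_neg_left smul_closed)

lemma add_diff_cancel_left: "u \<in> carr \<Longrightarrow> v \<in> carr \<Longrightarrow> (u \<oplus> v) \<ominus> u = v"
  using eq_diff_iff[of v "u \<oplus> v" u] add_commute[of u v] by simp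

lemma diff_add_cancel_left: "u \<in> carr \<Longrightarrow> v \<in> carr \<Longrightarrow> u \<ominus> (u \<oplus> v) = aneg v"
  by (simp add: diff_conv_add_neg neg_add)

lemma smul_diff: "a \<in> carr \<Longrightarrow> b \<in> carr \<Longrightarrow> c \<odot> (a \<ominus> b) = c \<odot> a \<ominus> c \<odot> b"
  by (simp add: diff_conv_add_neg smul_add smul_smul mult.commute)

lemma diff_add_diff:
  "a \<in> carr \<Longrightarrow> b \<in> carr \<Longrightarrow> c \<in> carr \<Longrightarrow> d \<in> carr \<Longrightarrow> (a \<ominus> b) \<oplus> (c \<ominus> d) = (a \<oplus> c) \<ominus> (b \<oplus> d)"
  and add_diff_assoc: "a \<in> carr \<Longrightarrow> b \<in> carr \<Longrightarrow> c \<in> carr \<Longrightarrow> a \<oplus> (b \<ominus> c) = (a \<oplus> b) \<ominus> c"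
  and diff_add_assoc: "a \<in> carr \<Longrightarrow> b \<in> carr \<Longrightarrow> c \<in> carr \<Longrightarrow> (a \<ominus> b) \<oplus> c = (a \<oplus> c) \<ominus> b"
  and diff_diff_right: "a \<in> carr \<Longrightarrow> b \<in> carr \<Longrightarrow> c \<in> carr \<Longrightarrow> a \<ominus> (b \<ominus> c) = (a \<oplus> c) \<ominus> b"
  and diff_diff_left: "a \<in> carr \<Longrightarrow> b \<in> carr \<Longrightarrow> c \<in> carr \<Longrightarrow> (a \<ominus> b) \<ominus> c = a \<ominus> (b \<oplus> c)"
  by (simp_all add: diff_conv_add_neg neg_add add_ac)

lemmas diff_normalize =
  diff_add_diff add_diff_assoc diff_add_assoc diff_diff_right diff_diff_left

abbreviation (input) rmult where "rmult z \<equiv> \<lambda>y. y \<star> z"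

lemma right_mult_derivation:
  "x \<in> carr \<Longrightarrow> y \<in> carr \<Longrightarrow> z \<in> carr \<Longrightarrow> (x \<star> y) \<star> z = x \<star> (y \<star> z) \<oplus> (x \<star> z) \<star> y"
  using leibniz_identity eq_diff_iff by (metis bracket_closed)

lemma PDer_rmult:
  assumes a: "a \<in> carr"
  shows "PDer A carr (rmult a)"
  unfolding PDer_def
proof (intro conjI ballI allI)
  fix x y assume "x \<in> carr" "y \<in> carr"
  then show "(x \<oplus> y) \<star> a = x \<star> a \<oplus> y \<star> a" "(x \<star> y) \<star> a = (x \<star> a) \<star> y \<oplus> x \<star> (y \<star> a)"
    using a right_mult_derivation[of x y a] by (simp_all add: bracket_add_left add_commute)
qed (use a in \<open>simp_all add: bracket_smul_left\<close>)

lemma bracket_zero_left [simp]: "x \<in> carr \<Longrightarrow> \<zero> \<star> x = \<zero>"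
  by (metis bracket_smul_left smul_zero_scalar zero_closed bracket_closed)

lemma bracket_zero_right [simp]: "x \<in> carr \<Longrightarrow> x \<star> \<zero> = \<zero>"
  by (metis bracket_smul_right smul_zero_scalar zero_closed bracket_closed)

lemma bracket_diff_left: "x \<in> carr \<Longrightarrow> y \<in> carr \<Longrightarrow> z \<in> carr \<Longrightarrow> (x \<ominus> y) \<star> z = x \<star> z \<ominus> y \<star> z"
  by (simp add: diff_conv_add_neg bracket_add_left bracket_smul_left)

lemma bracket_diff_right: "x \<in> carr \<Longrightarrow> y \<in> carr \<Longrightarrow> z \<in> carr \<Longrightarrow> x \<star> (y \<ominus> z) = x \<star> y \<ominus> x \<star> z"
  by (simp add: diff_conv_add_neg bracket_add_right bracket_smul_right)

lemma bracket_right_antisym: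
  assumes "x \<in> carr" "y \<in> carr" "z \<in> carr"
  shows "x \<star> (y \<star> z) \<oplus> x \<star> (z \<star> y) = \<zero>"
  using assms by (simp add: leibniz_identity diff_conv_add_neg add_ac)

lemma bracket_right_square: "x \<in> carr \<Longrightarrow> y \<in> carr \<Longrightarrow> x \<star> (y \<star> y) = \<zero>"
  using leibniz_identity[of x y y] by simp

lemma subspaceD:
  assumes "subspace A V"
  shows "V \<subseteq> carr" "\<zero> \<in> V" "x \<in> V \<Longrightarrow> y \<in> V \<Longrightarrow> x \<oplus> y \<in> V" "x \<in> V \<Longrightarrow> c \<odot> x \<in> V"
  using assms unfolding subspace_def by auto

lemma subspace_diff: "subspace A V \<Longrightarrow> x \<in> V \<Longrightarrow> y \<in> V \<Longrightarrow> x \<ominus> y \<in> V"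
  by (simp add: diff_conv_add_neg subspaceD)

lemma idealD:
  assumes "ideal A I"
  shows "subspace A I" "I \<subseteq> carr" "\<zero> \<in> I"
    "x \<in> I \<Longrightarrow> y \<in> I \<Longrightarrow> x \<oplus> y \<in> I" "x \<in> I \<Longrightarrow> c \<odot> x \<in> I"
    "x \<in> I \<Longrightarrow> y \<in> carr \<Longrightarrow> x \<star> y \<in> I" "x \<in> I \<Longrightarrow> y \<in> carr \<Longrightarrow> y \<star> x \<in> I"
    "x \<in> I \<Longrightarrow> y \<in> I \<Longrightarrow> x \<ominus> y \<in> I"
proof -
  have I: "subspace A I"
    using assms unfolding ideal_def by blast
  then show "subspace A I" "I \<subseteq> carr" "\<zero> \<in> I"
    "x \<in> I \<Longrightarrow> y \<in> I \<Longrightarrow> x \<oplus> y \<in> I" "x \<in> I \<Longrightarrow> c \<odot> x \<in> I"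
    "x \<in> I \<Longrightarrow> y \<in> I \<Longrightarrow> x \<ominus> y \<in> I"
    using subspaceD[OF I] subspace_diff[OF I] by auto
  show "x \<in> I \<Longrightarrow> y \<in> carr \<Longrightarrow> x \<star> y \<in> I" "x \<in> I \<Longrightarrow> y \<in> carr \<Longrightarrow> y \<star> x \<in> I"
    using assms unfolding ideal_def by auto
qed

lemma ideal_subset: "ideal A I \<Longrightarrow> x \<in> I \<Longrightarrow> x \<in> carr"
  using idealD(2) by blast

lemma ideal_Int: "ideal A I \<Longrightarrow> ideal A J \<Longrightarrow> ideal A (I \<inter> J)"
  unfolding ideal_def subspace_def by auto

lemma ideal_carrier: "ideal A carr"
  unfolding ideal_def subspace_def by auto

lemma subspace_lspan:
  assumes "X \<subseteq> carr"
  shows "subspace A (lspan A X)"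
proof -
  have "subspace A carr"
    unfolding subspace_def by auto
  then have "lspan A X \<subseteq> carr"
    using assms unfolding lspan_def by blast
  then show ?thesis
    unfolding lspan_def subspace_def by (intro conjI ballI allI) auto
qed

lemma lspan_least: "subspace A V \<Longrightarrow> X \<subseteq> V \<Longrightarrow> lspan A X \<subseteq> V"
  unfolding lspan_def by auto

lemma bracket_in_isq: "x \<in> I \<Longrightarrow> y \<in> I \<Longrightarrow> x \<star> y \<in> isq A I"
  unfolding isq_def lspan_def by blast

lemma isq_least:
  assumes "subspace A V" "\<And>a b. a \<in> I \<Longrightarrow> b \<in> I \<Longrightarrow> a \<star> b \<in> V"
  shows "isq A I \<subseteq> V"
  unfolding isq_def using assms by (intro lspan_least) auto

lemma isq_subset: "ideal A I \<Longrightarrow> isq A I \<subseteq> I"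
  using isq_least[of I I] idealD(1,6) ideal_subset by blast

lemma subspace_isq: "ideal A I \<Longrightarrow> subspace A (isq A I)"
  unfolding isq_def using ideal_subset bracket_closed by (intro subspace_lspan) blast

lemma isq_mono: "ideal A J \<Longrightarrow> I \<subseteq> J \<Longrightarrow> isq A I \<subseteq> isq A J"
  by (intro isq_least subspace_isq) (auto intro: bracket_in_isq)

lemma subspace_stable_part:
  assumes V: "subspace A V"
  shows "subspace A {v \<in> V. \<forall>y\<in>carr. v \<star> y \<in> V \<and> y \<star> v \<in> V}" (is "subspace A ?W")
proof -
  have VC: "v \<in> V \<Longrightarrow> v \<in> carr" for v
    using subspaceD(1)[OF V] by blast
  show ?thesis
    unfolding subspace_def
  proof (intro conjI ballI allI)
    show "?W \<subseteq> carr" "\<zero> \<in> ?W"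
      using subspaceD(2)[OF V] VC by auto
  next
    fix x y assume "x \<in> ?W" "y \<in> ?W"
    then show "x \<oplus> y \<in> ?W"
      using VC subspaceD(3)[OF V] by (auto simp: bracket_add_left bracket_add_right)
  next
    fix c x assume "x \<in> ?W"
    then show "c \<odot> x \<in> ?W"
      using VC subspaceD(4)[OF V] by (auto simp: bracket_smul_left bracket_smul_right)
  qed
qed

lemma ideal_isq:
  assumes I: "ideal A I"
  shows "ideal A (isq A I)"
proof -
  let ?Q = "isq A I"
  have Q: "subspace A ?Q"
    by (rule subspace_isq[OF I])
  have "a \<star> b \<in> {v \<in> ?Q. \<forall>y\<in>carr. v \<star> y \<in> ?Q \<and> y \<star> v \<in> ?Q}" if ab: "a \<in> I" "b \<in> I" for a b
  proof -
    have "(a \<star> b) \<star> y \<in> ?Q \<and> y \<star> (a \<star> b) \<in> ?Q" if y: "y \<in> carr" for y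
    proof -
      have a: "a \<in> carr" "b \<in> carr"
        using ab ideal_subset[OF I] by auto
      have "a \<star> (b \<star> y) \<in> ?Q" "(a \<star> y) \<star> b \<in> ?Q" "(y \<star> a) \<star> b \<in> ?Q" "(y \<star> b) \<star> a \<in> ?Q"
        using ab y idealD(6,7)[OF I] bracket_in_isq by auto
      moreover have "(a \<star> b) \<star> y = a \<star> (b \<star> y) \<oplus> (a \<star> y) \<star> b"
        "y \<star> (a \<star> b) = (y \<star> a) \<star> b \<ominus> (y \<star> b) \<star> a"
        using a y right_mult_derivation leibniz_identity by auto
      ultimately show ?thesis
        using subspaceD(3)[OF Q] subspace_diff[OF Q] by simp
    qed
    then show ?thesis
      using bracket_in_isq[OF ab] by blast
  qed
  then have "?Q \<subseteq> {v \<in> ?Q. \<forall>y\<in>carr. v \<star> y \<in> ?Q \<and> y \<star> v \<in> ?Q}"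
    by (rule isq_least[OF subspace_stable_part[OF Q]])
  then show ?thesis
    using Q unfolding ideal_def by blast
qed

lemma essential_ideal: "essential A K \<Longrightarrow> ideal A K"
  unfolding essential_def by auto

lemma essential_subset: "essential A K \<Longrightarrow> x \<in> K \<Longrightarrow> x \<in> carr"
  using essential_ideal ideal_subset by blast

lemma essential_Int:
  assumes I: "essential A I" and J: "essential A J"
  shows "essential A (I \<inter> J)"
  unfolding essential_def
proof (intro conjI allI impI)
  show "ideal A (I \<inter> J)"
    using ideal_Int essential_ideal I J by blast
  fix M assume M: "ideal A M \<and> M \<noteq> {\<zero>}"
  then have "ideal A (J \<inter> M)" "J \<inter> M \<noteq> {\<zero>}"
    using ideal_Int essential_ideal J unfolding essential_def by blast+
  then show "I \<inter> J \<inter> M \<noteq> {\<zero>}"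
    using I unfolding essential_def by (simp add: Int_assoc)
qed

lemma essential_carrier: "essential A carr"
  unfolding essential_def using ideal_carrier idealD(2) by (auto simp: Int_absorb1)

lemma PDerD:
  assumes "PDer A I d"
  shows "x \<in> I \<Longrightarrow> d x \<in> carr" "x \<in> I \<Longrightarrow> y \<in> I \<Longrightarrow> d (x \<oplus> y) = d x \<oplus> d y"
    "x \<in> I \<Longrightarrow> d (c \<odot> x) = c \<odot> d x" "x \<in> I \<Longrightarrow> y \<in> I \<Longrightarrow> d (x \<star> y) = d x \<star> y \<oplus> x \<star> d y"
  using assms unfolding PDer_def by auto

lemma PDer_diff:
  assumes "PDer A I d" "subspace A I" "x \<in> I" "y \<in> I"
  shows "d (x \<ominus> y) = d x \<ominus> d y"
  using assms PDerD(2,3) subspaceD(4) by (simp add: diff_conv_add_neg)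

lemma PDer_cong:
  assumes d: "PDer A I d" and I: "ideal A I" and eq: "\<And>x. x \<in> I \<Longrightarrow> d x = g x"
  shows "PDer A I g"
  unfolding PDer_def
proof (intro conjI ballI allI)
  fix x y assume x: "x \<in> I" and y: "y \<in> I"
  show "g (x \<oplus> y) = g x \<oplus> g y" "g (x \<star> y) = g x \<star> y \<oplus> x \<star> g y"
    using PDerD(2,4)[OF d x y] eq x y idealD(4,6)[OF I x] ideal_subset[OF I y] by simp_all
next
  fix x c assume x: "x \<in> I"
  show "g x \<in> carr" "g (c \<odot> x) = c \<odot> g x"
    using PDerD(1,3)[OF d x] eq x idealD(5)[OF I x] by simp_all
qed

lemma PDer_add:
  assumes d: "PDer A I d" and m: "PDer A J m" and I: "ideal A I"
  shows "PDer A (I \<inter> J) (\<lambda>x. d x \<oplus> m x)"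
  unfolding PDer_def
proof (intro conjI ballI allI)
  fix x assume x: "x \<in> I \<inter> J"
  then show "d x \<oplus> m x \<in> carr"
    using PDerD(1)[OF d] PDerD(1)[OF m] by simp
  fix c show "d (c \<odot> x) \<oplus> m (c \<odot> x) = c \<odot> (d x \<oplus> m x)"
    using x PDerD(1,3)[OF d] PDerD(1,3)[OF m] by (simp add: smul_add)
next
  fix x y assume x: "x \<in> I \<inter> J" and y: "y \<in> I \<inter> J"
  have C: "x \<in> carr" "y \<in> carr" "d x \<in> carr" "d y \<in> carr" "m x \<in> carr" "m y \<in> carr"
    using x y ideal_subset[OF I] PDerD(1)[OF d] PDerD(1)[OF m] by auto
  show "d (x \<oplus> y) \<oplus> m (x \<oplus> y) = d x \<oplus> m x \<oplus> (d y \<oplus> m y)"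
    using x y C PDerD(2)[OF d] PDerD(2)[OF m] by (simp add: add_ac)
  show "d (x \<star> y) \<oplus> m (x \<star> y) = (d x \<oplus> m x) \<star> y \<oplus> x \<star> (d y \<oplus> m y)"
    using x y C PDerD(4)[OF d] PDerD(4)[OF m] by (simp add: bracket_add_left bracket_add_right add_ac)
qed

lemma PDer_smul:
  assumes d: "PDer A I d" and I: "ideal A I"
  shows "PDer A I (\<lambda>y. d (c \<odot> y))"
  unfolding PDer_def
proof (intro conjI ballI allI)
  fix x assume x: "x \<in> I"
  then show "d (c \<odot> x) \<in> carr"
    using PDerD(1)[OF d] idealD(5)[OF I] by blast
  fix b show "d (c \<odot> b \<odot> x) = b \<odot> d (c \<odot> x)"
    using x PDerD(1,3)[OF d] idealD(5)[OF I] by (simp add: smul_smul mult.commute)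
next
  fix x y assume x: "x \<in> I" and y: "y \<in> I"
  have C: "x \<in> carr" "y \<in> carr" "d x \<in> carr" "d y \<in> carr"
    using x y ideal_subset[OF I] PDerD(1)[OF d] by auto
  show "d (c \<odot> (x \<oplus> y)) = d (c \<odot> x) \<oplus> d (c \<odot> y)"
    using x y C PDerD(2,3)[OF d] idealD(4,5)[OF I] by (simp add: smul_add)
  show "d (c \<odot> (x \<star> y)) = d (c \<odot> x) \<star> y \<oplus> x \<star> d (c \<odot> y)"
    using x y C PDerD(3,4)[OF d] idealD(6)[OF I]
    by (simp add: smul_add bracket_smul_left bracket_smul_right)
qed

lemma PDer_subset: "PDer A I d \<Longrightarrow> N \<subseteq> I \<Longrightarrow> PDer A N d"
  unfolding PDer_def by blast

lemma PDer_isq_into: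
  assumes d: "PDer A N d" and N: "ideal A N" and x: "x \<in> isq A N"
  shows "d x \<in> N"
proof -
  let ?V = "{x \<in> N. d x \<in> N}"
  have "d \<zero> = \<zero>"
    using PDerD(1)[OF d, of \<zero>] PDerD(3)[OF d, of \<zero> 0] idealD(3)[OF N] by auto
  then have "subspace A ?V"
    using N PDerD(2,3)[OF d] idealD(2-5)[OF N] unfolding subspace_def by (auto simp: subset_iff)
  moreover have "a \<star> b \<in> ?V" if ab: "a \<in> N" "b \<in> N" for a b
  proof -
    have "d (a \<star> b) = d a \<star> b \<oplus> a \<star> d b" "d a \<in> carr" "d b \<in> carr"
      using PDerD[OF d] ab by auto
    moreover have "a \<star> b \<in> N" "d a \<star> b \<in> N" "a \<star> d b \<in> N"
      using ab idealD(6,7)[OF N] ideal_subset[OF N] calculation(2,3) by auto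
    ultimately show ?thesis
      using idealD(4)[OF N] by simp
  qed
  ultimately show ?thesis
    using isq_least[of ?V N] x by blast
qed

abbreviation pder_bracket where "pder_bracket d m \<equiv> \<lambda>x. m (d x) \<ominus> d (m x)"

lemma PDer_comp_bracket:
  assumes d: "PDer A N d" and m: "PDer A M m" and M: "ideal A M"
    and xy: "x \<in> N" "y \<in> N" "x \<in> M" "y \<in> M" "d x \<in> M" "d y \<in> M"
  shows "m (d (x \<star> y)) = (m (d x) \<star> y \<oplus> d x \<star> m y) \<oplus> (m x \<star> d y \<oplus> x \<star> m (d y))"
proof -
  have "d x \<star> y \<in> M" "x \<star> d y \<in> M"
    using xy idealD(6,7)[OF M] ideal_subset[OF M] by auto
  then have "m (d x \<star> y \<oplus> x \<star> d y) = m (d x \<star> y) \<oplus> m (x \<star> d y)"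
    using PDerD(2)[OF m] by blast
  then show ?thesis
    using PDerD(4)[OF d xy(1,2)] PDerD(4)[OF m xy(5,4)] PDerD(4)[OF m xy(3,6)] by simp
qed

lemma PDer_pder_bracket:
  assumes d: "PDer A N d" and m: "PDer A M m" and N: "ideal A N" and M: "ideal A M"
    and U: "U \<subseteq> N \<inter> M" "\<And>x. x \<in> U \<Longrightarrow> d x \<in> M \<and> m x \<in> N"
  shows "PDer A U (pder_bracket d m)"
proof -
  have into: "x \<in> N" "x \<in> M" "d x \<in> M" "m x \<in> N" if "x \<in> U" for x
    using that U by auto
  have C: "x \<in> carr" "d x \<in> carr" "m x \<in> carr" "m (d x) \<in> carr" "d (m x) \<in> carr"
    if "x \<in> U" for x
    using into[OF that] ideal_subset[OF N] PDerD(1)[OF d] PDerD(1)[OF m] by auto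
  show ?thesis
    unfolding PDer_def
  proof (intro conjI ballI allI)
    fix x assume x: "x \<in> U"
    show "pder_bracket d m x \<in> carr"
      using C[OF x] by simp
    fix c
    have "m (d (c \<odot> x)) = c \<odot> m (d x)" "d (m (c \<odot> x)) = c \<odot> d (m x)"
      using into[OF x] PDerD(3)[OF d] PDerD(3)[OF m] by simp_all
    then show "pder_bracket d m (c \<odot> x) = c \<odot> pder_bracket d m x"
      using C[OF x] by (simp add: smul_diff)
  next
    fix x y assume x: "x \<in> U" and y: "y \<in> U"
    note x' = into[OF x] C[OF x] and y' = into[OF y] C[OF y]
    have "m (d (x \<oplus> y)) = m (d x) \<oplus> m (d y)" "d (m (x \<oplus> y)) = d (m x) \<oplus> d (m y)"
      using x' y' PDerD(2)[OF d] PDerD(2)[OF m] by simp_all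
    then show "pder_bracket d m (x \<oplus> y) = pder_bracket d m x \<oplus> pder_bracket d m y"
      using x' y' by (simp add: diff_add_diff)
    have "m (d (x \<star> y)) = (m (d x) \<star> y \<oplus> d x \<star> m y) \<oplus> (m x \<star> d y \<oplus> x \<star> m (d y))"
      "d (m (x \<star> y)) = (d (m x) \<star> y \<oplus> m x \<star> d y) \<oplus> (d x \<star> m y \<oplus> x \<star> d (m y))"
      using PDer_comp_bracket[OF d m M] PDer_comp_bracket[OF m d N] x' y' by blast+
    then show "pder_bracket d m (x \<star> y) = pder_bracket d m x \<star> y \<oplus> x \<star> pder_bracket d m y"
      using x' y' by (simp add: bracket_diff_left bracket_diff_right diff_normalize diff_eq_diff_iff add_ac)
  qed
qed

lemma isq_cube_subset:
  assumes N: "ideal A N" and I: "ideal A I" and J: "ideal A J" and NIJ: "N \<subseteq> I" "N \<subseteq> J"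
  shows "isq A (isq A (isq A N)) \<subseteq> isq A (I \<inter> isq A J)"
proof (rule isq_mono)
  show "ideal A (I \<inter> isq A J)"
    using ideal_Int[OF I ideal_isq[OF J]] .
  have "isq A (isq A N) \<subseteq> isq A N" "isq A N \<subseteq> N" "isq A N \<subseteq> isq A J"
    using isq_subset ideal_isq N isq_mono[OF J NIJ(2)] by blast+
  then show "isq A (isq A N) \<subseteq> I \<inter> isq A J"
    using NIJ(1) by blast
qed

lemma pder_bracket_leibniz_identity:
  assumes d: "PDer A N d" and m: "PDer A N m" and n: "PDer A N n"
    and N: "ideal A N" and x: "x \<in> isq A (isq A (isq A N))"
  shows "pder_bracket d (pder_bracket m n) x
    = pder_bracket (pder_bracket d m) n x \<ominus> pder_bracket (pder_bracket d n) m x"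
proof -
  have N1: "ideal A (isq A N)" and N2: "ideal A (isq A (isq A N))"
    using ideal_isq N by blast+
  have sub: "isq A (isq A N) \<subseteq> isq A N" "isq A N \<subseteq> N"
    using isq_subset N1 N by blast+
  have into: "f z \<in> N'" if "ideal A N'" "N' \<subseteq> N" "PDer A N f" "z \<in> isq A N'" for f N' z
    using PDer_isq_into[OF PDer_subset] that by blast
  have w1: "d x \<in> isq A (isq A N)" "m x \<in> isq A (isq A N)" "n x \<in> isq A (isq A N)"
    using into[OF N2 _ _ x] sub d m n by auto
  have w2: "m (d x) \<in> isq A N" "n (d x) \<in> isq A N" "d (m x) \<in> isq A N"
    "n (m x) \<in> isq A N" "d (n x) \<in> isq A N" "m (n x) \<in> isq A N"
    using into[OF N1] w1 sub d m n by auto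
  have w3: "n (m (d x)) \<in> N" "m (n (d x)) \<in> N" "n (d (m x)) \<in> N"
    "d (n (m x)) \<in> N" "m (d (n x)) \<in> N" "d (m (n x)) \<in> N"
    using PDer_isq_into[OF _ N] w2 d m n by auto
  have split: "d (n (m x) \<ominus> m (n x)) = d (n (m x)) \<ominus> d (m (n x))"
    "n (m (d x) \<ominus> d (m x)) = n (m (d x)) \<ominus> n (d (m x))"
    "m (n (d x) \<ominus> d (n x)) = m (n (d x)) \<ominus> m (d (n x))"
    using PDer_diff[OF _ idealD(1)[OF N]] w2 sub d m n by (meson subsetD)+
  show ?thesis
    unfolding split using w3 ideal_subset[OF N]
    by (simp add: diff_normalize diff_eq_diff_iff add_ac)
qed

end

section \<open>Semiprime algebras and essential ideals\<close>

locale semiprime_leibniz_algebra = leibniz_algebra +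
  assumes semiprime: "semiprime A"
begin

lemma ideal_trivial_square:
  assumes "ideal A I" "\<And>x y. x \<in> I \<Longrightarrow> y \<in> I \<Longrightarrow> x \<star> y = \<zero>"
  shows "I = {\<zero>}"
proof -
  have "\<zero> = \<zero> \<star> \<zero>" "\<zero> \<in> I"
    using idealD(3)[OF assms(1)] by simp_all
  then have "{x \<star> y |x y. x \<in> I \<and> y \<in> I} = {\<zero>}"
    using assms(2) by blast
  then show ?thesis
    using semiprime assms(1) unfolding semiprime_def by blast
qed

text \<open>The left annihilator is an ideal with trivial square containing every square \<open>y \<star> y\<close>;
  hence semiprime right Leibniz algebras are Lie algebras.\<close>

lemma left_annihilator_trivial:
  assumes a: "a \<in> carr" and ann: "\<And>x. x \<in> carr \<Longrightarrow> x \<star> a = \<zero>"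
  shows "a = \<zero>"
proof -
  let ?Z = "{z \<in> carr. \<forall>x\<in>carr. x \<star> z = \<zero>}"
  have "ideal A ?Z"
    unfolding ideal_def subspace_def
  proof (intro conjI ballI allI)
    fix x y assume x: "x \<in> ?Z" and y: "y \<in> carr"
    show "x \<star> y \<in> ?Z" "y \<star> x \<in> ?Z"
      using x y leibniz_identity[of _ x y] leibniz_identity[of _ y x] by auto
  qed (auto simp: bracket_add_right bracket_smul_right)
  then have "?Z = {\<zero>}"
    by (rule ideal_trivial_square) auto
  then show ?thesis
    using a ann by auto
qed

lemma bracket_self [simp]: "x \<in> carr \<Longrightarrow> x \<star> x = \<zero>"
  by (rule left_annihilator_trivial) (simp_all add: bracket_right_square)

lemma bracket_anticommute:
  assumes "x \<in> carr" "y \<in> carr"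
  shows "x \<star> y = aneg (y \<star> x)"
proof -
  have "\<zero> = (x \<oplus> y) \<star> (x \<oplus> y)"
    using assms by simp
  also have "\<dots> = x \<star> y \<oplus> y \<star> x"
    using assms by (simp add: bracket_add_left bracket_add_right del: bracket_self) (simp add: add_ac)
  finally show ?thesis
    using add_eq_zero_imp_eq_neg assms by simp
qed

lemma bracket_eq_zero_commute:
  assumes "x \<in> carr" "y \<in> carr"
  shows "x \<star> y = \<zero> \<longleftrightarrow> y \<star> x = \<zero>"
proof
  assume "x \<star> y = \<zero>"
  then show "y \<star> x = \<zero>"
    using assms bracket_anticommute[of y x] by simp
next
  assume "y \<star> x = \<zero>"
  then show "x \<star> y = \<zero>"
    using assms bracket_anticommute[of x y] by simp
qed

text \<open>The annihilator of \<open>K\<close> is an ideal meeting \<open>K\<close> in an ideal with trivial square.\<close>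

lemma essential_annihilator_trivial:
  assumes K: "essential A K" and a: "a \<in> carr" and ann: "\<And>k. k \<in> K \<Longrightarrow> a \<star> k = \<zero>"
  shows "a = \<zero>"
proof -
  have KI: "ideal A K"
    using essential_ideal[OF K] .
  let ?Z = "{z \<in> carr. \<forall>k\<in>K. z \<star> k = \<zero>}"
  have bracket_right: "x \<star> y \<in> ?Z" if "x \<in> ?Z" "y \<in> carr" for x y
    using that ideal_subset[OF KI] idealD(7)[OF KI] right_mult_derivation[of x y] by auto
  have Z: "ideal A ?Z"
    unfolding ideal_def subspace_def
  proof (intro conjI ballI allI)
    fix x y assume x: "x \<in> ?Z" and y: "y \<in> carr"
    show "x \<star> y \<in> ?Z"
      using x y by (rule bracket_right)
    have "(y \<star> x) \<star> k = aneg ((x \<star> y) \<star> k)" if "k \<in> K" for k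
      using x y that ideal_subset[OF KI] by (simp add: bracket_anticommute[of y x] bracket_smul_left)
    then show "y \<star> x \<in> ?Z"
      using bracket_right[OF x y] x y by auto
  qed (use ideal_subset[OF KI] in \<open>auto simp: bracket_add_left bracket_smul_left\<close>)
  have "K \<inter> ?Z = {\<zero>}"
    using ideal_Int[OF KI Z] by (rule ideal_trivial_square) auto
  then have "?Z = {\<zero>}"
    using K Z unfolding essential_def by blast
  then show ?thesis
    using a ann by auto
qed

lemma essential_annihilator_trivial':
  assumes "essential A K" "a \<in> carr" "\<And>k. k \<in> K \<Longrightarrow> k \<star> a = \<zero>"
  shows "a = \<zero>"
proof (rule essential_annihilator_trivial[OF assms(1,2)])
  fix k assume "k \<in> K"
  then show "a \<star> k = \<zero>"
    using assms bracket_eq_zero_commute essential_subset by blast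
qed

lemma essential_isq:
  assumes I: "essential A I"
  shows "essential A (isq A I)"
  unfolding essential_def
proof (intro conjI allI impI)
  have II: "ideal A I"
    using essential_ideal I .
  show "ideal A (isq A I)"
    using ideal_isq II .
  fix M assume M: "ideal A M \<and> M \<noteq> {\<zero>}"
  then have "ideal A (I \<inter> M)" "I \<inter> M \<noteq> {\<zero>}"
    using ideal_Int II I unfolding essential_def by blast+
  then obtain a b where ab: "a \<in> I \<inter> M" "b \<in> I \<inter> M" "a \<star> b \<noteq> \<zero>"
    using ideal_trivial_square by blast
  moreover have "a \<star> b \<in> M"
    using ab M idealD(6)[of M a b] ideal_subset[OF II] by blast
  ultimately have "a \<star> b \<in> isq A I \<inter> M"
    using bracket_in_isq by blast
  then show "isq A I \<inter> M \<noteq> {\<zero>}"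
    using ab by auto
qed

text \<open>For \<open>x\<close> in the common domain, \<open>d x \<ominus> m x\<close> annihilates the essential ideal.\<close>

lemma PDer_agree:
  assumes d: "PDer A I d" and m: "PDer A J m" and I: "ideal A I"
    and K: "essential A K" and KIJ: "K \<subseteq> I \<inter> J" and eq: "\<And>x. x \<in> K \<Longrightarrow> d x = m x"
    and x: "x \<in> I \<inter> J"
  shows "d x = m x"
proof -
  have xC: "x \<in> carr" "d x \<in> carr" "m x \<in> carr"
    using x ideal_subset[OF I] PDerD(1) d m by auto
  have "(d x \<ominus> m x) \<star> k = \<zero>" if k: "k \<in> K" for k
  proof -
    have kC: "k \<in> carr" "m k \<in> carr"
      using k KIJ essential_subset[OF K] PDerD(1)[OF m] by auto
    have "x \<star> k \<in> K"
      using idealD(7)[OF essential_ideal[OF K] k xC(1)] .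
    moreover have kIJ: "k \<in> I" "k \<in> J"
      using k KIJ by auto
    ultimately have "d x \<star> k \<oplus> x \<star> d k = m x \<star> k \<oplus> x \<star> m k" "d k = m k"
      using PDerD(4)[OF d, of x k] PDerD(4)[OF m, of x k] x k eq by auto
    then have "d x \<star> k \<oplus> x \<star> m k = m x \<star> k \<oplus> x \<star> m k"
      by simp
    then have "d x \<star> k = m x \<star> k"
      using add_right_cancel xC kC by (meson bracket_closed)
    then show ?thesis
      using bracket_diff_left xC kC by simp
  qed
  then have "d x \<ominus> m x = \<zero>"
    using essential_annihilator_trivial[OF K] xC by simp
  then show ?thesis
    using diff_eq_zero_imp_eq xC by blast
qed

section \<open>The algebra of quotients of partial derivations\<close>

abbreviation QP where "QP \<equiv> Qpairs A"
abbreviation QR where "QR \<equiv> Qrel A"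
abbreviation cls where "cls d I \<equiv> qclass A d I"

lemma Qpairs_iff: "(d, I) \<in> QP \<longleftrightarrow> essential A I \<and> PDer A I d"
  by (simp add: Qpairs_def)

lemma QpairsD:
  assumes "(d, I) \<in> QP"
  shows "essential A I" "PDer A I d" "ideal A I" "x \<in> I \<Longrightarrow> x \<in> carr" "x \<in> I \<Longrightarrow> d x \<in> carr"
  using assms essential_ideal essential_subset PDerD(1) by (auto simp: Qpairs_iff)

lemma equiv_Qrel: "equiv QP QR"
proof (rule equivI)
  show "QR \<subseteq> QP \<times> QP"
    unfolding Qrel_def by auto
  show "refl_on QP QR"
    by (rule refl_onI) (auto simp: Qrel_def Qpairs_iff)
  show "sym QR"
    by (rule symI) (auto simp: Qrel_def)
  show "trans QR"
  proof (rule transI)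
    fix p q r assume pq: "(p, q) \<in> QR" and qr: "(q, r) \<in> QR"
    obtain d I m J n M where pqr: "p = (d, I)" "q = (m, J)" "r = (n, M)"
      by (cases p, cases q, cases r) auto
    from pq obtain K1 where K1: "essential A K1" "K1 \<subseteq> I \<inter> J" "\<forall>x\<in>K1. d x = m x"
      unfolding pqr Qrel_def by blast
    from qr obtain K2 where K2: "essential A K2" "K2 \<subseteq> J \<inter> M" "\<forall>x\<in>K2. m x = n x"
      unfolding pqr Qrel_def by blast
    have "essential A (K1 \<inter> K2)" "K1 \<inter> K2 \<subseteq> I \<inter> M" "\<forall>x\<in>K1 \<inter> K2. d x = n x"
      using essential_Int K1 K2 by auto
    then show "(p, r) \<in> QR"
      using pq qr unfolding pqr Qrel_def by blast
  qed
qed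

lemma qclass_in_quotient: "(d, I) \<in> QP \<Longrightarrow> cls d I \<in> QP // QR"
  unfolding qclass_def by (rule quotientI)

lemma quotient_qclassE:
  assumes "q \<in> QP // QR"
  obtains d I where "(d, I) \<in> QP" "q = cls d I"
  using assms unfolding qclass_def by (auto elim!: quotientE)

lemma qclass_eq_iff:
  assumes dI: "(d, I) \<in> QP" and mJ: "(m, J) \<in> QP"
  shows "cls d I = cls m J \<longleftrightarrow> (\<forall>x\<in>I \<inter> J. d x = m x)"
proof -
  have "cls d I = cls m J \<longleftrightarrow> ((d, I), (m, J)) \<in> QR"
    unfolding qclass_def by (rule eq_equiv_class_iff[OF equiv_Qrel dI mJ])
  also have "\<dots> \<longleftrightarrow> (\<forall>x\<in>I \<inter> J. d x = m x)"
  proof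
    assume "((d, I), (m, J)) \<in> QR"
    then obtain K where "essential A K" "K \<subseteq> I \<inter> J" "\<forall>x\<in>K. d x = m x"
      unfolding Qrel_def by blast
    then show "\<forall>x\<in>I \<inter> J. d x = m x"
      using PDer_agree QpairsD[OF dI] QpairsD(2)[OF mJ] by blast
  next
    assume "\<forall>x\<in>I \<inter> J. d x = m x"
    then show "((d, I), (m, J)) \<in> QR"
      using dI mJ essential_Int QpairsD(1) unfolding Qrel_def by blast
  qed
  finally show ?thesis .
qed

lemma qclass_eqI:
  assumes "(d, I) \<in> QP" "(m, J) \<in> QP" "essential A K" "K \<subseteq> I \<inter> J" "\<And>x. x \<in> K \<Longrightarrow> d x = m x"
  shows "cls d I = cls m J"
proof -
  have "((d, I), (m, J)) \<in> QR"
    using assms unfolding Qrel_def by blast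
  then show ?thesis
    unfolding qclass_def by (rule equiv_class_eq[OF equiv_Qrel])
qed

lemma qrep_qclass:
  assumes dI: "(d, I) \<in> QP" and rep: "qrep (cls d I) = (d', I')"
  shows "(d', I') \<in> QP" "\<forall>x\<in>I \<inter> I'. d' x = d x"
proof -
  have "(d, I) \<in> cls d I"
    unfolding qclass_def by (rule equiv_class_self[OF equiv_Qrel dI])
  then have "(d', I') \<in> cls d I"
    using rep someI[of "\<lambda>p. p \<in> cls d I"] unfolding qrep_def by metis
  then have rel: "((d, I), (d', I')) \<in> QR"
    unfolding qclass_def by simp
  then show d'I': "(d', I') \<in> QP"
    unfolding Qrel_def by blast
  have "cls d' I' = cls d I"
    using rel unfolding qclass_def by (metis equiv_class_eq equiv_Qrel)
  then show "\<forall>x\<in>I \<inter> I'. d' x = d x"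
    using qclass_eq_iff[OF d'I' dI] by blast
qed

lemma Qpairs_zero: "((\<lambda>x. \<zero>), carr) \<in> QP"
  unfolding Qpairs_iff PDer_def using essential_carrier by simp

lemma Qpairs_right_mult: "a \<in> carr \<Longrightarrow> (rmult a, carr) \<in> QP"
  using PDer_rmult essential_carrier by (simp add: Qpairs_iff)

lemma Qpairs_add:
  assumes dI: "(d, I) \<in> QP" and mJ: "(m, J) \<in> QP"
  shows "((\<lambda>x. d x \<oplus> m x), I \<inter> J) \<in> QP"
  using essential_Int[OF QpairsD(1)[OF dI] QpairsD(1)[OF mJ]]
    PDer_add[OF QpairsD(2)[OF dI] QpairsD(2)[OF mJ] QpairsD(3)[OF dI]]
  by (simp add: Qpairs_iff)

lemma Qpairs_smul:
  assumes dI: "(d, I) \<in> QP"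
  shows "((\<lambda>y. d (c \<odot> y)), I) \<in> QP"
  using QpairsD(1)[OF dI] PDer_smul[OF QpairsD(2,3)[OF dI]] by (simp add: Qpairs_iff)

lemma Qpairs_bracket:
  assumes dI: "(d, I) \<in> QP" and mJ: "(m, J) \<in> QP"
  shows "(pder_bracket d m, isq A (I \<inter> J)) \<in> QP"
proof -
  have N: "ideal A (I \<inter> J)"
    using ideal_Int QpairsD(3)[OF dI] QpairsD(3)[OF mJ] .
  have d: "PDer A (I \<inter> J) d" and m: "PDer A (I \<inter> J) m"
    using PDer_subset QpairsD(2)[OF dI] QpairsD(2)[OF mJ] by blast+
  have "PDer A (isq A (I \<inter> J)) (pder_bracket d m)"
    by (rule PDer_pder_bracket[OF d m N N])
      (use isq_subset[OF N] PDer_isq_into[OF d N] PDer_isq_into[OF m N] in auto)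
  then show ?thesis
    using essential_isq[OF essential_Int[OF QpairsD(1)[OF dI] QpairsD(1)[OF mJ]]] by (simp add: Qpairs_iff)
qed

lemma Qpairs_isq_into:
  assumes "(d, I) \<in> QP" "(m, J) \<in> QP" "x \<in> isq A (I \<inter> J)"
  shows "x \<in> I \<inter> J" "d x \<in> I \<inter> J" "m x \<in> I \<inter> J"
proof -
  have N: "ideal A (I \<inter> J)"
    using ideal_Int QpairsD(3) assms(1,2) by blast
  then show "x \<in> I \<inter> J"
    using isq_subset assms(3) by blast
  show "d x \<in> I \<inter> J" "m x \<in> I \<inter> J"
    using PDer_isq_into[OF PDer_subset N assms(3)] QpairsD(2) assms(1,2) by blast+
qed

lemma qadd_qclass:
  assumes dI: "(d, I) \<in> QP" and mJ: "(m, J) \<in> QP"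
  shows "qadd A (cls d I) (cls m J) = cls (\<lambda>x. d x \<oplus> m x) (I \<inter> J)"
proof -
  obtain d' I' m' J' where rep: "qrep (cls d I) = (d', I')" "qrep (cls m J) = (m', J')"
    by (metis surj_pair)
  note d' = qrep_qclass[OF dI rep(1)] and m' = qrep_qclass[OF mJ rep(2)]
  have "qadd A (cls d I) (cls m J) = cls (\<lambda>x. d' x \<oplus> m' x) (I' \<inter> J')"
    unfolding qadd_def rep by simp
  also have "\<dots> = cls (\<lambda>x. d x \<oplus> m x) (I \<inter> J)"
    using d' m' Qpairs_add[OF d'(1) m'(1)] Qpairs_add[OF dI mJ] by (subst qclass_eq_iff) auto
  finally show ?thesis .
qed

lemma qsmul_qclass:
  assumes dI: "(d, I) \<in> QP"
  shows "qsmul A c (cls d I) = cls (\<lambda>y. d (c \<odot> y)) I"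
proof -
  obtain d' I' where rep: "qrep (cls d I) = (d', I')"
    by (metis surj_pair)
  note d' = qrep_qclass[OF dI rep]
  have "c \<odot> x \<in> I \<inter> I'" if "x \<in> I' \<inter> I" for x
    using that idealD(5) QpairsD(3)[OF dI] QpairsD(3)[OF d'(1)] by blast
  then have "qsmul A c (cls d I) = cls (\<lambda>y. d' (c \<odot> y)) I'"
    "\<forall>x\<in>I' \<inter> I. d' (c \<odot> x) = d (c \<odot> x)"
    using d' unfolding qsmul_def rep by auto
  then show ?thesis
    using Qpairs_smul[OF d'(1)] Qpairs_smul[OF dI] qclass_eq_iff by simp
qed

lemma qbr_qclass:
  assumes dI: "(d, I) \<in> QP" and mJ: "(m, J) \<in> QP"
  shows "qbr A (cls d I) (cls m J) = cls (pder_bracket d m) (isq A (I \<inter> J))"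
proof -
  obtain d' I' m' J' where rep: "qrep (cls d I) = (d', I')" "qrep (cls m J) = (m', J')"
    by (metis surj_pair)
  note d' = qrep_qclass[OF dI rep(1)] and m' = qrep_qclass[OF mJ rep(2)]
  have "pder_bracket d' m' x = pder_bracket d m x"
    if x: "x \<in> isq A (I' \<inter> J') \<inter> isq A (I \<inter> J)" for x
  proof -
    have "x \<in> I \<inter> J \<inter> I' \<inter> J'" "d x \<in> I \<inter> J" "m x \<in> I \<inter> J" "d' x \<in> I' \<inter> J'" "m' x \<in> I' \<inter> J'"
      using Qpairs_isq_into[OF dI mJ] Qpairs_isq_into[OF d'(1) m'(1)] x by auto
    then show ?thesis
      using d'(2) m'(2) by auto
  qed
  then show ?thesis
    unfolding qbr_def rep
    using Qpairs_bracket[OF d'(1) m'(1)] Qpairs_bracket[OF dI mJ] qclass_eq_iff by simp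
qed

lemma Qpairs_diff:
  assumes dI: "(d, I) \<in> QP" and mJ: "(m, J) \<in> QP"
  shows "((\<lambda>x. d x \<ominus> m x), I \<inter> J) \<in> QP"
proof -
  have sum: "((\<lambda>x. d x \<oplus> m (-1 \<odot> x)), I \<inter> J) \<in> QP"
    using Qpairs_add[OF dI Qpairs_smul[OF mJ]] .
  have "d x \<oplus> m (-1 \<odot> x) = d x \<ominus> m x" if "x \<in> I \<inter> J" for x
    using PDerD(3)[OF QpairsD(2)[OF mJ]] that by (simp add: diff_conv_add_neg)
  then have "PDer A (I \<inter> J) (\<lambda>x. d x \<ominus> m x)"
    by (rule PDer_cong[OF QpairsD(2,3)[OF sum]]) simp
  then show ?thesis
    using QpairsD(1)[OF sum] by (simp add: Qpairs_iff)
qed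

lemma qdiff_qclass:
  assumes dI: "(d, I) \<in> QP" and mJ: "(m, J) \<in> QP"
  shows "qadd A (cls d I) (qsmul A (-1) (cls m J)) = cls (\<lambda>x. d x \<ominus> m x) (I \<inter> J)"
proof -
  have "d x \<oplus> m (-1 \<odot> x) = d x \<ominus> m x" if "x \<in> I \<inter> J" for x
    using PDerD(3)[OF QpairsD(2)[OF mJ]] that by (simp add: diff_conv_add_neg)
  then show ?thesis
    using qsmul_qclass[OF mJ] qadd_qclass[OF dI Qpairs_smul[OF mJ]]
      qclass_eq_iff[OF Qpairs_add[OF dI Qpairs_smul[OF mJ]] Qpairs_diff[OF dI mJ]] by simp
qed

abbreviation Q where "Q \<equiv> Qalg A"

lemma Qalg_simps:
  "lcar Q = QP // QR" "ladd Q = qadd A" "lzero Q = qzero A" "lsmul Q = qsmul A" "lbr Q = qbr A"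
  by (simp_all add: Qalg_def)

lemma qzero_qclass: "qzero A = cls (\<lambda>x. \<zero>) carr"
  unfolding qzero_def ..

lemmas qclass_simps = qadd_qclass qsmul_qclass qbr_qclass qzero_qclass
  Qpairs_add Qpairs_smul Qpairs_bracket Qpairs_zero

lemma qzero_in_quotient: "qzero A \<in> QP // QR"
  and qadd_in_quotient: "p \<in> QP // QR \<Longrightarrow> q \<in> QP // QR \<Longrightarrow> qadd A p q \<in> QP // QR"
  and qsmul_in_quotient: "p \<in> QP // QR \<Longrightarrow> qsmul A c p \<in> QP // QR"
  and qbr_in_quotient: "p \<in> QP // QR \<Longrightarrow> q \<in> QP // QR \<Longrightarrow> qbr A p q \<in> QP // QR"
  by (auto elim!: quotient_qclassE simp: qclass_simps qclass_in_quotient)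

lemma qclass_vspace_laws:
  assumes dI: "(d, I) \<in> QP" and mJ: "(m, J) \<in> QP" and nM: "(n, M) \<in> QP"
  defines "p \<equiv> cls d I" and "q \<equiv> cls m J" and "r \<equiv> cls n M"
  shows "qadd A (qadd A p q) r = qadd A p (qadd A q r)" "qadd A p q = qadd A q p"
    "qadd A (qzero A) p = p" "qadd A p (qsmul A (-1) p) = qzero A" "qsmul A 1 p = p"
    "qsmul A (a * b) p = qsmul A a (qsmul A b p)"
    "qsmul A (a + b) p = qadd A (qsmul A a p) (qsmul A b p)"
    "qsmul A a (qadd A p q) = qadd A (qsmul A a p) (qsmul A a q)"
proof -
  have carr: "f x \<in> carr" if "(f, K) \<in> QP" "x \<in> K" for f K x
    using QpairsD(5) that .
  have smul: "d (c \<odot> x) = c \<odot> d x" "c \<odot> x \<in> I" if "x \<in> I" for c x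
    using PDerD(3)[OF QpairsD(2)[OF dI] that] idealD(5)[OF QpairsD(3)[OF dI] that] .
  have add: "d (x \<oplus> y) = d x \<oplus> d y" if "x \<in> I" "y \<in> I" for x y
    using PDerD(2)[OF QpairsD(2)[OF dI] that] .
  show "qadd A (qadd A p q) r = qadd A p (qadd A q r)" "qadd A p q = qadd A q p"
    "qadd A (qzero A) p = p" "qadd A p (qsmul A (-1) p) = qzero A" "qsmul A 1 p = p"
    "qsmul A (a * b) p = qsmul A a (qsmul A b p)"
    "qsmul A (a + b) p = qadd A (qsmul A a p) (qsmul A b p)"
    "qsmul A a (qadd A p q) = qadd A (qsmul A a p) (qsmul A a q)"
    unfolding p_def q_def r_def
    using dI mJ nM carr[OF dI] carr[OF mJ] carr[OF nM] smul add
      Qpairs_add[OF dI Qpairs_smul[OF dI, of "-1"]] Qpairs_smul[OF Qpairs_smul[OF dI, of b], of a]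
      Qpairs_add[OF Qpairs_smul[OF dI, of a] Qpairs_smul[OF dI, of b]]
    by (simp_all add: qclass_simps qclass_eq_iff add_ac smul_smul smul_add_scalar mult.commute
        essential_subset[OF QpairsD(1)[OF dI]])
qed

lemma Q_vspace: "vspace Q"
  unfolding vspace_def Qalg_simps
  by (intro conjI ballI allI)
    (auto elim!: quotient_qclassE simp: qclass_vspace_laws qzero_in_quotient qadd_in_quotient
      qsmul_in_quotient qclass_in_quotient)

lemma qbr_qadd_left:
  assumes dI: "(d, I) \<in> QP" and mJ: "(m, J) \<in> QP" and nM: "(n, M) \<in> QP"
  shows "qbr A (qadd A (cls d I) (cls m J)) (cls n M)
    = qadd A (qbr A (cls d I) (cls n M)) (qbr A (cls m J) (cls n M))"
proof -
  have "n (d x \<oplus> m x) \<ominus> (d (n x) \<oplus> m (n x)) = (n (d x) \<ominus> d (n x)) \<oplus> (n (m x) \<ominus> m (n x))"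
    if "x \<in> isq A (I \<inter> M)" "x \<in> isq A (J \<inter> M)" for x
    using Qpairs_isq_into[OF dI nM that(1)] Qpairs_isq_into[OF mJ nM that(2)]
      PDerD(2)[OF QpairsD(2)[OF nM]] QpairsD(5)[OF dI] QpairsD(5)[OF mJ] QpairsD(5)[OF nM]
    by (simp add: diff_add_diff)
  then show ?thesis
    using dI mJ nM qclass_eq_iff[OF Qpairs_bracket[OF Qpairs_add[OF dI mJ] nM]
      Qpairs_add[OF Qpairs_bracket[OF dI nM] Qpairs_bracket[OF mJ nM]]]
    by (simp add: qclass_simps)
qed

lemma qbr_qadd_right:
  assumes dI: "(d, I) \<in> QP" and mJ: "(m, J) \<in> QP" and nM: "(n, M) \<in> QP"
  shows "qbr A (cls d I) (qadd A (cls m J) (cls n M))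
    = qadd A (qbr A (cls d I) (cls m J)) (qbr A (cls d I) (cls n M))"
proof -
  have "m (d x) \<oplus> n (d x) \<ominus> d (m x \<oplus> n x) = (m (d x) \<ominus> d (m x)) \<oplus> (n (d x) \<ominus> d (n x))"
    if "x \<in> isq A (I \<inter> J)" "x \<in> isq A (I \<inter> M)" for x
    using Qpairs_isq_into[OF dI mJ that(1)] Qpairs_isq_into[OF dI nM that(2)]
      PDerD(2)[OF QpairsD(2)[OF dI]] QpairsD(5)[OF dI] QpairsD(5)[OF mJ] QpairsD(5)[OF nM]
    by (simp add: diff_add_diff)
  then show ?thesis
    using dI mJ nM qclass_eq_iff[OF Qpairs_bracket[OF dI Qpairs_add[OF mJ nM]]
      Qpairs_add[OF Qpairs_bracket[OF dI mJ] Qpairs_bracket[OF dI nM]]]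
    by (simp add: qclass_simps)
qed

lemma qbr_qsmul_left:
  assumes dI: "(d, I) \<in> QP" and mJ: "(m, J) \<in> QP"
  shows "qbr A (qsmul A c (cls d I)) (cls m J) = qsmul A c (qbr A (cls d I) (cls m J))"
proof -
  have "m (c \<odot> x) = c \<odot> m x" if "x \<in> isq A (I \<inter> J)" for x
    using Qpairs_isq_into[OF dI mJ that] PDerD(3)[OF QpairsD(2)[OF mJ]] by blast
  then show ?thesis
    using dI mJ qclass_eq_iff[OF Qpairs_bracket[OF Qpairs_smul[OF dI] mJ] Qpairs_smul[OF Qpairs_bracket[OF dI mJ]]]
    by (simp add: qclass_simps)
qed

lemma qbr_qsmul_right:
  assumes dI: "(d, I) \<in> QP" and mJ: "(m, J) \<in> QP"
  shows "qbr A (cls d I) (qsmul A c (cls m J)) = qsmul A c (qbr A (cls d I) (cls m J))"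
proof -
  have "d (c \<odot> x) = c \<odot> d x" if "x \<in> isq A (I \<inter> J)" for x
    using Qpairs_isq_into[OF dI mJ that] PDerD(3)[OF QpairsD(2)[OF dI]] by blast
  then show ?thesis
    using dI mJ qclass_eq_iff[OF Qpairs_bracket[OF dI Qpairs_smul[OF mJ]] Qpairs_smul[OF Qpairs_bracket[OF dI mJ]]]
    by (simp add: qclass_simps)
qed

lemma qbr_leibniz_identity:
  assumes dI: "(d, I) \<in> QP" and mJ: "(m, J) \<in> QP" and nM: "(n, M) \<in> QP"
  shows "qbr A (cls d I) (qbr A (cls m J) (cls n M))
    = qadd A (qbr A (qbr A (cls d I) (cls m J)) (cls n M))
        (qsmul A (-1) (qbr A (qbr A (cls d I) (cls n M)) (cls m J)))"
proof -
  let ?N = "I \<inter> J \<inter> M"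
  have N: "essential A ?N"
    using essential_Int QpairsD(1)[OF dI] QpairsD(1)[OF mJ] QpairsD(1)[OF nM] by blast
  have ideals: "ideal A ?N" "ideal A I" "ideal A J" "ideal A M"
    using essential_ideal[OF N] QpairsD(3)[OF dI] QpairsD(3)[OF mJ] QpairsD(3)[OF nM] by blast+
  have PDer_N: "PDer A ?N d" "PDer A ?N m" "PDer A ?N n"
    using PDer_subset[OF QpairsD(2)[OF dI], of ?N] PDer_subset[OF QpairsD(2)[OF mJ], of ?N]
      PDer_subset[OF QpairsD(2)[OF nM], of ?N] by auto
  have "isq A (isq A (isq A ?N)) \<subseteq> isq A (I \<inter> isq A (J \<inter> M))"
    "isq A (isq A (isq A ?N)) \<subseteq> isq A (M \<inter> isq A (I \<inter> J))"
    "isq A (isq A (isq A ?N)) \<subseteq> isq A (J \<inter> isq A (I \<inter> M))"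
    using isq_cube_subset[OF ideals(1) ideals(2) ideal_Int[OF ideals(3,4)]]
      isq_cube_subset[OF ideals(1) ideals(4) ideal_Int[OF ideals(2,3)]]
      isq_cube_subset[OF ideals(1) ideals(3) ideal_Int[OF ideals(2,4)]] by blast+
  then have "cls (pder_bracket d (pder_bracket m n)) (isq A (I \<inter> isq A (J \<inter> M)))
    = cls (\<lambda>x. pder_bracket (pder_bracket d m) n x \<ominus> pder_bracket (pder_bracket d n) m x)
        (isq A (isq A (I \<inter> J) \<inter> M) \<inter> isq A (isq A (I \<inter> M) \<inter> J))"
    using essential_isq[OF essential_isq[OF essential_isq[OF N]]] pder_bracket_leibniz_identity[OF PDer_N ideals(1)]
    by (intro qclass_eqI[OF Qpairs_bracket[OF dI Qpairs_bracket[OF mJ nM]]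
        Qpairs_diff[OF Qpairs_bracket[OF Qpairs_bracket[OF dI mJ] nM] Qpairs_bracket[OF Qpairs_bracket[OF dI nM] mJ]]])
      (auto simp: Int_commute)
  then show ?thesis
    by (simp only: qbr_qclass[OF dI mJ] qbr_qclass[OF dI nM] qbr_qclass[OF mJ nM]
        qbr_qclass[OF Qpairs_bracket[OF dI mJ] nM] qbr_qclass[OF Qpairs_bracket[OF dI nM] mJ]
        qbr_qclass[OF dI Qpairs_bracket[OF mJ nM]]
        qdiff_qclass[OF Qpairs_bracket[OF Qpairs_bracket[OF dI mJ] nM] Qpairs_bracket[OF Qpairs_bracket[OF dI nM] mJ]])
qed

lemma Q_leibniz: "leibniz Q"
  unfolding leibniz_def Qalg_simps
  by (intro conjI ballI allI Q_vspace)
    (auto elim!: quotient_qclassE simp: qbr_in_quotient qclass_in_quotient lsub_def Qalg_simps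
      qbr_qadd_left qbr_qadd_right qbr_qsmul_left qbr_qsmul_right qbr_leibniz_identity)

lemma phi_qclass: "phi A x = cls (rmult x) carr"
  unfolding phi_def ..

lemma phi_in_quotient: "x \<in> carr \<Longrightarrow> phi A x \<in> QP // QR"
  unfolding phi_qclass by (rule qclass_in_quotient[OF Qpairs_right_mult])

lemma phi_zero: "phi A \<zero> = qzero A"
  unfolding phi_qclass qzero_qclass
  using qclass_eq_iff[OF Qpairs_right_mult[OF zero_closed] Qpairs_zero] by simp

lemma phi_add:
  assumes x: "x \<in> carr" and y: "y \<in> carr"
  shows "phi A (x \<oplus> y) = qadd A (phi A x) (phi A y)"
  unfolding phi_qclass qadd_qclass[OF Qpairs_right_mult[OF x] Qpairs_right_mult[OF y]]
  using qclass_eq_iff[OF Qpairs_right_mult[OF add_closed[OF x y]]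
      Qpairs_add[OF Qpairs_right_mult[OF x] Qpairs_right_mult[OF y]]] x y
  by (simp add: bracket_add_right)

lemma phi_smul:
  assumes x: "x \<in> carr"
  shows "phi A (c \<odot> x) = qsmul A c (phi A x)"
  unfolding phi_qclass qsmul_qclass[OF Qpairs_right_mult[OF x]]
  using qclass_eq_iff[OF Qpairs_right_mult[OF smul_closed[OF x]] Qpairs_smul[OF Qpairs_right_mult[OF x]]] x
  by (simp add: bracket_smul_left bracket_smul_right)

lemma phi_bracket:
  assumes x: "x \<in> carr" and y: "y \<in> carr"
  shows "phi A (x \<star> y) = qbr A (phi A x) (phi A y)"
  unfolding phi_qclass qbr_qclass[OF Qpairs_right_mult[OF x] Qpairs_right_mult[OF y]]
  using qclass_eq_iff[OF Qpairs_right_mult[OF bracket_closed[OF x y]]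
      Qpairs_bracket[OF Qpairs_right_mult[OF x] Qpairs_right_mult[OF y]]] x y
    isq_subset[OF ideal_carrier]
  by (auto simp: leibniz_identity)

lemma phi_inj:
  assumes x: "x \<in> carr" and y: "y \<in> carr" and eq: "phi A x = phi A y"
  shows "x = y"
proof -
  have "z \<star> (x \<ominus> y) = \<zero>" if z: "z \<in> carr" for z
    using eq qclass_eq_iff[OF Qpairs_right_mult[OF x] Qpairs_right_mult[OF y]] z x y
    by (simp add: phi_qclass bracket_diff_right)
  then have "x \<ominus> y = \<zero>"
    using left_annihilator_trivial x y by simp
  then show ?thesis
    using diff_eq_zero_imp_eq x y by blast
qed

lemma Qpairs_bracket_rmult:
  assumes gI: "(g, I) \<in> QP" and z: "z \<in> carr"
  shows "(pder_bracket g (rmult z), I) \<in> QP" "(pder_bracket (rmult z) g, I) \<in> QP"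
proof -
  have mem: "y \<star> z \<in> I" "g y \<in> carr" "y \<in> carr" if "y \<in> I" for y
    using that z idealD(6)[OF QpairsD(3)[OF gI]] QpairsD(4,5)[OF gI] by blast+
  have "PDer A I (pder_bracket g (rmult z))"
    by (rule PDer_pder_bracket[OF QpairsD(2)[OF gI] PDer_rmult[OF z] QpairsD(3)[OF gI] ideal_carrier]) (use mem in auto)
  moreover have "PDer A I (pder_bracket (rmult z) g)"
    by (rule PDer_pder_bracket[OF PDer_rmult[OF z] QpairsD(2)[OF gI] ideal_carrier QpairsD(3)[OF gI]]) (use mem in auto)
  ultimately show "(pder_bracket g (rmult z), I) \<in> QP" "(pder_bracket (rmult z) g, I) \<in> QP"
    using QpairsD(1)[OF gI] by (simp_all add: Qpairs_iff)
qed

lemma qbr_qclass_phi: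
  assumes gI: "(g, I) \<in> QP" and z: "z \<in> carr"
  shows "qbr A (cls g I) (phi A z) = cls (pder_bracket g (rmult z)) I"
    "qbr A (phi A z) (cls g I) = cls (pder_bracket (rmult z) g) I"
proof -
  have "I \<inter> carr = I" "carr \<inter> I = I"
    using QpairsD(4)[OF gI] by auto
  then have "isq A (I \<inter> carr) \<subseteq> I" "isq A (carr \<inter> I) \<subseteq> I"
    using isq_subset[OF QpairsD(3)[OF gI]] by simp_all
  then show "qbr A (cls g I) (phi A z) = cls (pder_bracket g (rmult z)) I"
    "qbr A (phi A z) (cls g I) = cls (pder_bracket (rmult z) g) I"
    unfolding phi_qclass qbr_qclass[OF gI Qpairs_right_mult[OF z]] qbr_qclass[OF Qpairs_right_mult[OF z] gI]
    using qclass_eq_iff[OF Qpairs_bracket[OF gI Qpairs_right_mult[OF z]] Qpairs_bracket_rmult(1)[OF gI z]]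
      qclass_eq_iff[OF Qpairs_bracket[OF Qpairs_right_mult[OF z] gI] Qpairs_bracket_rmult(2)[OF gI z]]
    by auto
qed

lemma qbr_phi_qclass_eq_phi:
  assumes gI: "(g, I) \<in> QP" and a: "a \<in> I"
  shows "qbr A (phi A a) (cls g I) = phi A (g a)" "qbr A (cls g I) (phi A a) = phi A (aneg (g a))"
proof -
  note gI' = QpairsD[OF gI]
  have aC: "a \<in> carr" and gaC: "g a \<in> carr"
    using gI' a by auto
  have "g (x \<star> a) \<ominus> g x \<star> a = x \<star> g a" "g x \<star> a \<ominus> g (x \<star> a) = x \<star> aneg (g a)" if x: "x \<in> I" for x
    using PDerD(4)[OF gI'(2) x a] gI' x a aC gaC
    by (simp_all add: add_diff_cancel_left diff_add_cancel_left bracket_smul_right)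
  then show "qbr A (phi A a) (cls g I) = phi A (g a)" "qbr A (cls g I) (phi A a) = phi A (aneg (g a))"
    unfolding qbr_qclass_phi[OF gI aC]
    using qclass_eq_iff[OF Qpairs_bracket_rmult(2)[OF gI aC] Qpairs_right_mult[OF gaC]]
      qclass_eq_iff[OF Qpairs_bracket_rmult(1)[OF gI aC] Qpairs_right_mult[OF smul_closed[OF gaC]]]
      gI'(4)
    by (simp_all add: phi_qclass Int_absorb2 subsetI)
qed

lemma qclass_neq_qzero:
  assumes gI: "(g, I) \<in> QP" and nz: "cls g I \<noteq> qzero A" and J: "essential A J"
  obtains a where "a \<in> I \<inter> J" "g a \<noteq> \<zero>"
proof -
  have "\<exists>a\<in>I \<inter> J. g a \<noteq> \<zero>"
  proof (rule ccontr)
    assume "\<not> ?thesis"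
    then have "cls g I = qzero A"
      unfolding qzero_qclass
      using gI Qpairs_zero essential_Int[OF QpairsD(1)[OF gI] J] QpairsD(4)[OF gI]
      by (intro qclass_eqI[where K = "I \<inter> J"]) auto
    then show False
      using nz by simp
  qed
  then show ?thesis
    using that by blast
qed

lemma phi_preimage_ideal:
  assumes II: "ideal Q II"
  shows "ideal A {z \<in> carr. phi A z \<in> II}"
proof -
  interpret Q: leibniz_algebra Q
    by unfold_locales (rule Q_leibniz)
  show ?thesis
    unfolding ideal_def subspace_def
    using Q.idealD[OF II] phi_zero phi_add phi_smul phi_bracket phi_in_quotient
    by (auto simp: Qalg_simps)
qed

lemma Q_semiprime: "semiprime Q"
  unfolding semiprime_def
proof (intro allI impI)
  fix II assume "ideal Q II \<and> II \<noteq> {lzero Q}"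
  then have II: "ideal Q II" and nz: "II \<noteq> {lzero Q}"
    by blast+
  interpret Q: leibniz_algebra Q
    by unfold_locales (rule Q_leibniz)
  obtain q where q: "q \<in> II" "q \<noteq> qzero A"
    using nz Q.idealD(3)[OF II] by (auto simp: Qalg_simps)
  have "q \<in> QP // QR"
    using Q.idealD(2)[OF II] q(1) by (auto simp: Qalg_simps)
  then obtain g I where gI: "(g, I) \<in> QP" "q = cls g I"
    by (rule quotient_qclassE)
  obtain a where a: "a \<in> I" "g a \<noteq> \<zero>"
    using qclass_neq_qzero[OF gI(1) _ essential_carrier] q gI by auto
  let ?J = "{z \<in> carr. phi A z \<in> II}"
  have "qbr A (phi A a) q \<in> II"
    using Q.idealD(7)[OF II q(1), of "phi A a"] phi_in_quotient QpairsD(4)[OF gI(1) a(1)]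
    by (simp add: Qalg_simps)
  then have "phi A (g a) \<in> II"
    using qbr_phi_qclass_eq_phi(1)[OF gI(1) a(1)] gI(2) by simp
  then have "g a \<in> ?J"
    using QpairsD(5)[OF gI(1) a(1)] by blast
  then obtain x y where xy: "x \<in> ?J" "y \<in> ?J" "x \<star> y \<noteq> \<zero>"
    using ideal_trivial_square[OF phi_preimage_ideal[OF II]] a(2) by blast
  then have "lbr Q (phi A x) (phi A y) \<noteq> lzero Q"
    using phi_bracket phi_inj[of "x \<star> y" \<zero>] phi_zero by (auto simp: Qalg_simps)
  then show "{lbr Q x y |x y. x \<in> II \<and> y \<in> II} \<noteq> {lzero Q}"
    using xy by blast
qed

lemma subalgebra_phi: "subalgebra Q (phi A ` carr)"
  unfolding subalgebra_def subspace_def Qalg_simps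
  using phi_in_quotient phi_zero[symmetric] phi_add[symmetric] phi_smul[symmetric] phi_bracket[symmetric]
  by (auto intro: image_eqI)

lemma assoc_gen_qclass:
  assumes "f \<in> assoc_gen Q (phi A ` carr)" and "(g, I) \<in> QP"
  shows "\<exists>g'. (g', I) \<in> QP \<and> f (cls g I) = cls g' I"
  using assms
proof (induction arbitrary: g rule: assoc_gen.induct)
  case (gen_R x)
  then obtain z where "z \<in> carr" "x = phi A z"
    by blast
  then show ?case
    using qbr_qclass_phi(1)[OF gen_R.prems] Qpairs_bracket_rmult(1)[OF gen_R.prems]
    by (intro exI[of _ "pder_bracket g (rmult z)"]) (simp add: Qalg_simps)
next
  case (gen_L x)
  then obtain z where "z \<in> carr" "x = phi A z"
    by blast
  then show ?case
    using qbr_qclass_phi(2)[OF gen_L.prems] Qpairs_bracket_rmult(2)[OF gen_L.prems]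
    by (intro exI[of _ "pder_bracket (rmult z) g"]) (simp add: Qalg_simps)
next
  case (gen_add f1 f2)
  then obtain g1 g2 where "(g1, I) \<in> QP" "f1 (cls g I) = cls g1 I" "(g2, I) \<in> QP" "f2 (cls g I) = cls g2 I"
    by blast
  then show ?case
    using qadd_qclass[of g1 I g2 I] Qpairs_add[of g1 I g2 I]
    by (intro exI[of _ "\<lambda>x. g1 x \<oplus> g2 x"]) (simp add: Qalg_simps)
next
  case (gen_smul f c)
  then obtain g1 where "(g1, I) \<in> QP" "f (cls g I) = cls g1 I"
    by blast
  then show ?case
    using qsmul_qclass[of g1 I c] Qpairs_smul[of g1 I c]
    by (intro exI[of _ "\<lambda>x. g1 (c \<odot> x)"]) (simp add: Qalg_simps)
next
  case (gen_comp f1 f2)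
  then show ?case
    by (metis comp_apply)
qed

lemma phi_in_colon:
  assumes gI: "(g, I) \<in> QP" and a: "a \<in> I"
  shows "phi A a \<in> colon Q (phi A ` carr) (cls g I)"
  unfolding colon_def
proof (intro CollectI conjI ballI)
  show "phi A a \<in> phi A ` carr"
    using QpairsD(4)[OF gI a] by blast
  fix u assume "u \<in> gen_sub Q (phi A ` carr) (cls g I)"
  then obtain c f where u: "u = qadd A (qsmul A c (cls g I)) (f (cls g I))"
    and f: "f \<in> assoc_gen Q (phi A ` carr)"
    unfolding gen_sub_def Qalg_simps by blast
  obtain g' where g': "(g', I) \<in> QP" "f (cls g I) = cls g' I"
    using assoc_gen_qclass[OF f gI] by blast
  let ?h = "\<lambda>x. g (c \<odot> x) \<oplus> g' x"
  have h: "(?h, I) \<in> QP" "u = cls ?h I"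
    using u g' qsmul_qclass[OF gI] qadd_qclass[OF Qpairs_smul[OF gI] g'(1)] Qpairs_add[OF Qpairs_smul[OF gI] g'(1)]
    by simp_all
  then show "lbr Q (phi A a) u \<in> phi A ` carr" "lbr Q u (phi A a) \<in> phi A ` carr"
    using qbr_phi_qclass_eq_phi[OF h(1) a] QpairsD(5)[OF h(1) a] by (simp_all add: Qalg_simps)
qed

lemma Q_alg_of_quotients: "alg_of_quotients Q (phi A ` carr)"
  unfolding alg_of_quotients_def
proof (intro conjI ballI impI Q_leibniz subalgebra_phi)
  fix p q assume p: "p \<in> lcar Q" and q: "q \<in> lcar Q" and nz: "p \<noteq> lzero Q"
  obtain g I where gI: "(g, I) \<in> QP" "q = cls g I"
    using q by (auto simp: Qalg_simps elim: quotient_qclassE)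
  obtain e M where eM: "(e, M) \<in> QP" "p = cls e M"
    using p by (auto simp: Qalg_simps elim: quotient_qclassE)
  obtain a where a: "a \<in> M \<inter> I" "e a \<noteq> \<zero>"
    using qclass_neq_qzero[OF eM(1) _ QpairsD(1)[OF gI(1)]] nz eM(2) by (auto simp: Qalg_simps)
  have "lbr Q p (phi A a) = phi A (aneg (e a))"
    using qbr_phi_qclass_eq_phi(2)[OF eM(1)] a eM(2) by (simp add: Qalg_simps)
  moreover have "phi A (aneg (e a)) \<noteq> lzero Q"
  proof
    assume "phi A (aneg (e a)) = lzero Q"
    moreover have eaC: "e a \<in> carr"
      using QpairsD(5)[OF eM(1)] a(1) by blast
    ultimately have "aneg (e a) = \<zero>"
      using phi_inj[of "aneg (e a)" \<zero>] phi_zero by (simp add: Qalg_simps)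
    then have "e a = \<zero>"
      using neg_neg[OF eaC] by (metis smul_zero)
    then show False
      using a(2) by blast
  qed
  ultimately show "(\<exists>x\<in>colon Q (phi A ` carr) q. lbr Q x p \<noteq> lzero Q) \<or>
      (\<exists>y\<in>colon Q (phi A ` carr) q. lbr Q p y \<noteq> lzero Q)"
    using phi_in_colon[OF gI(1)] a gI(2) by auto
qed

end

section \<open>Maximality among algebras of quotients\<close>

locale quotient_algebra_embedding = semiprime_leibniz_algebra A for A :: "('f::field, 'a) lalg" +
  fixes S :: "('f, 's) lalg" and emb :: "'a \<Rightarrow> 's"
  assumes mono: "lmono A S emb" and quotients: "alg_of_quotients S (emb ` lcar A)"
begin

sublocale S: leibniz_algebra S
  using quotients unfolding alg_of_quotients_def leibniz_algebra_def by blast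

abbreviation E where "E \<equiv> emb ` carr"

lemma emb_closed: "x \<in> carr \<Longrightarrow> emb x \<in> S.carr"
  and emb_add: "x \<in> carr \<Longrightarrow> y \<in> carr \<Longrightarrow> emb (x \<oplus> y) = ladd S (emb x) (emb y)"
  and emb_smul: "x \<in> carr \<Longrightarrow> emb (c \<odot> x) = lsmul S c (emb x)"
  and emb_bracket: "x \<in> carr \<Longrightarrow> y \<in> carr \<Longrightarrow> emb (x \<star> y) = lbr S (emb x) (emb y)"
  and emb_inj: "x \<in> carr \<Longrightarrow> y \<in> carr \<Longrightarrow> emb x = emb y \<Longrightarrow> x = y"
  using mono unfolding lmono_def lhom_def inj_on_def by blast+

lemma emb_zero: "emb \<zero> = lzero S"
  using emb_smul[OF zero_closed, of 0] emb_closed[OF zero_closed] by simp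

lemma emb_eq_zero_iff: "x \<in> carr \<Longrightarrow> emb x = lzero S \<longleftrightarrow> x = \<zero>"
  using emb_inj[of x \<zero>] emb_zero by auto

lemma E_subset: "E \<subseteq> S.carr"
  using emb_closed by blast

lemma E_closed:
  "a \<in> E \<Longrightarrow> b \<in> E \<Longrightarrow> ladd S a b \<in> E" "a \<in> E \<Longrightarrow> lsmul S c a \<in> E"
  "a \<in> E \<Longrightarrow> b \<in> E \<Longrightarrow> lbr S a b \<in> E" "a \<in> E \<Longrightarrow> b \<in> E \<Longrightarrow> lsub S a b \<in> E"
proof -
  have "ladd S (emb x) (emb y) \<in> E" "lsmul S c (emb x) \<in> E" "lbr S (emb x) (emb y) \<in> E"
    "lsub S (emb x) (emb y) \<in> E" if "x \<in> carr" "y \<in> carr" for x y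
    using that emb_add[of x y, symmetric] emb_smul[of x c, symmetric] emb_bracket[of x y, symmetric]
      emb_add[of x "aneg y", symmetric] emb_smul[of y "-1", symmetric]
    by (auto simp: lsub_def)
  then show "a \<in> E \<Longrightarrow> b \<in> E \<Longrightarrow> ladd S a b \<in> E" "a \<in> E \<Longrightarrow> lsmul S c a \<in> E"
    "a \<in> E \<Longrightarrow> b \<in> E \<Longrightarrow> lbr S a b \<in> E" "a \<in> E \<Longrightarrow> b \<in> E \<Longrightarrow> lsub S a b \<in> E"
    by auto
qed

lemma zero_in_E: "lzero S \<in> E"
  using emb_zero zero_closed by (metis image_eqI)

definition emb_inv where "emb_inv = inv_into carr emb"

lemma emb_inv_closed: "u \<in> E \<Longrightarrow> emb_inv u \<in> carr"
  unfolding emb_inv_def by (rule inv_into_into)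

lemma emb_emb_inv: "u \<in> E \<Longrightarrow> emb (emb_inv u) = u"
  unfolding emb_inv_def by (rule f_inv_into_f)

lemma emb_inv_emb: "x \<in> carr \<Longrightarrow> emb_inv (emb x) = x"
  unfolding emb_inv_def using mono unfolding lmono_def by (simp add: inv_into_f_f)

lemma assoc_gen_closed: "f \<in> assoc_gen S E \<Longrightarrow> u \<in> S.carr \<Longrightarrow> f u \<in> S.carr"
  by (induction arbitrary: u rule: assoc_gen.induct) (use E_subset in auto)

lemma gen_sub_closed: "s \<in> S.carr \<Longrightarrow> u \<in> gen_sub S E s \<Longrightarrow> u \<in> S.carr"
  unfolding gen_sub_def using assoc_gen_closed by auto

lemma gen_subI: "f \<in> assoc_gen S E \<Longrightarrow> ladd S (lsmul S c s) (f s) \<in> gen_sub S E s"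
  unfolding gen_sub_def by blast

lemma gen_sub_self:
  assumes s: "s \<in> S.carr"
  shows "s \<in> gen_sub S E s"
proof -
  have "(\<lambda>u. lsmul S 0 (lbr S u (emb \<zero>))) \<in> assoc_gen S E"
    by (intro assoc_gen.gen_smul assoc_gen.gen_R) simp
  from gen_subI[OF this, of 1 s] show ?thesis
    using s emb_closed[OF zero_closed] by simp
qed

lemma gen_sub_bracket:
  assumes s: "s \<in> S.carr" and y: "y \<in> E" and u: "u \<in> gen_sub S E s"
  shows "lbr S y u \<in> gen_sub S E s" "lbr S u y \<in> gen_sub S E s"
proof -
  obtain c f where u': "u = ladd S (lsmul S c s) (f s)" and f: "f \<in> assoc_gen S E"
    using u unfolding gen_sub_def by blast
  have C: "y \<in> S.carr" "f s \<in> S.carr"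
    using y E_subset assoc_gen_closed[OF f s] by auto
  let ?fL = "\<lambda>v. ladd S (lsmul S c (lbr S y v)) (((\<lambda>v. lbr S y v) \<circ> f) v)"
  let ?fR = "\<lambda>v. ladd S (lsmul S c (lbr S v y)) (((\<lambda>v. lbr S v y) \<circ> f) v)"
  have "?fL \<in> assoc_gen S E" "?fR \<in> assoc_gen S E"
    using assoc_gen.gen_add[OF assoc_gen.gen_smul[OF assoc_gen.gen_L[OF y]] assoc_gen.gen_comp[OF assoc_gen.gen_L[OF y] f]]
      assoc_gen.gen_add[OF assoc_gen.gen_smul[OF assoc_gen.gen_R[OF y]] assoc_gen.gen_comp[OF assoc_gen.gen_R[OF y] f]]
    by simp_all
  moreover have "lbr S y u = ladd S (lsmul S 0 s) (?fL s)" "lbr S u y = ladd S (lsmul S 0 s) (?fR s)"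
    unfolding u' using C s by (simp_all add: S.bracket_add_left S.bracket_add_right
        S.bracket_smul_left S.bracket_smul_right)
  ultimately show "lbr S y u \<in> gen_sub S E s" "lbr S u y \<in> gen_sub S E s"
    using gen_subI[of ?fL 0 s] gen_subI[of ?fR 0 s] by simp_all
qed

definition colon_ideal where "colon_ideal s = {x \<in> carr. emb x \<in> colon S E s}"

lemma colon_ideal_iff:
  "x \<in> colon_ideal s \<longleftrightarrow> x \<in> carr \<and> (\<forall>u\<in>gen_sub S E s. lbr S (emb x) u \<in> E \<and> lbr S u (emb x) \<in> E)"
  unfolding colon_ideal_def colon_def by auto

lemma colon_ideal_subset: "x \<in> colon_ideal s \<Longrightarrow> x \<in> carr"
  unfolding colon_ideal_def by blast

lemma colon_ideal_bracket:
  assumes s: "s \<in> S.carr" and x: "x \<in> colon_ideal s" and y: "y \<in> carr"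
  shows "x \<star> y \<in> colon_ideal s" "y \<star> x \<in> colon_ideal s"
proof -
  have xC: "x \<in> carr"
    using x colon_ideal_iff by blast
  have "lbr S (emb (x \<star> y)) u \<in> E \<and> lbr S u (emb (x \<star> y)) \<in> E \<and>
      lbr S (emb (y \<star> x)) u \<in> E \<and> lbr S u (emb (y \<star> x)) \<in> E" if u: "u \<in> gen_sub S E s" for u
  proof -
    have C: "emb x \<in> S.carr" "emb y \<in> S.carr" "u \<in> S.carr" "emb y \<in> E"
      using emb_closed xC y gen_sub_closed[OF s u] by auto
    have yu: "lbr S (emb y) u \<in> gen_sub S E s" "lbr S u (emb y) \<in> gen_sub S E s"
      using gen_sub_bracket[OF s C(4) u] by auto
    have E: "lbr S (emb x) (lbr S (emb y) u) \<in> E" "lbr S (lbr S u (emb y)) (emb x) \<in> E"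
      "lbr S (lbr S (emb y) u) (emb x) \<in> E" "lbr S (emb x) u \<in> E" "lbr S u (emb x) \<in> E"
      using x yu u colon_ideal_iff by auto
    have "lbr S (emb (x \<star> y)) u
        = ladd S (lbr S (emb x) (lbr S (emb y) u)) (lbr S (lbr S (emb x) u) (emb y))"
      "lbr S u (emb (x \<star> y))
        = lsub S (lbr S (lbr S u (emb x)) (emb y)) (lbr S (lbr S u (emb y)) (emb x))"
      "lbr S (emb (y \<star> x)) u
        = ladd S (lbr S (emb y) (lbr S (emb x) u)) (lbr S (lbr S (emb y) u) (emb x))"
      "lbr S u (emb (y \<star> x))
        = lsub S (lbr S (lbr S u (emb y)) (emb x)) (lbr S (lbr S u (emb x)) (emb y))"
      using emb_bracket xC y S.right_mult_derivation S.leibniz_identity C by auto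
    then show ?thesis
      using E E_closed C(4) by simp
  qed
  then show "x \<star> y \<in> colon_ideal s" "y \<star> x \<in> colon_ideal s"
    using xC y colon_ideal_iff by auto
qed

lemma colon_ideal_ideal:
  assumes s: "s \<in> S.carr"
  shows "ideal A (colon_ideal s)"
  unfolding ideal_def subspace_def
proof (intro conjI ballI allI)
  show "colon_ideal s \<subseteq> carr"
    using colon_ideal_subset by blast
  show "\<zero> \<in> colon_ideal s"
    using emb_zero gen_sub_closed[OF s] zero_in_E unfolding colon_ideal_iff by simp
next
  fix x y assume x: "x \<in> colon_ideal s" and y: "y \<in> colon_ideal s"
  then show "x \<oplus> y \<in> colon_ideal s"
    using gen_sub_closed[OF s] emb_closed E_closed
    by (auto simp: colon_ideal_iff emb_add S.bracket_add_left S.bracket_add_right)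
next
  fix c x assume x: "x \<in> colon_ideal s"
  then show "c \<odot> x \<in> colon_ideal s"
    using gen_sub_closed[OF s] emb_closed E_closed
    by (auto simp: colon_ideal_iff emb_smul S.bracket_smul_left S.bracket_smul_right)
next
  fix x y assume "x \<in> colon_ideal s" "y \<in> carr"
  then show "x \<star> y \<in> colon_ideal s" "y \<star> x \<in> colon_ideal s"
    using colon_ideal_bracket[OF s] by blast+
qed

lemma alg_of_quotientsE:
  assumes "p \<in> S.carr" "q \<in> S.carr" "p \<noteq> lzero S"
  obtains a where "a \<in> colon_ideal q" "lbr S (emb a) p \<noteq> lzero S"
    | a where "a \<in> colon_ideal q" "lbr S p (emb a) \<noteq> lzero S"
  using quotients assms unfolding alg_of_quotients_def colon_ideal_def colon_def by blast

lemma essential_colon_ideal: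
  assumes s: "s \<in> S.carr"
  shows "essential A (colon_ideal s)"
  unfolding essential_def
proof (intro conjI allI impI colon_ideal_ideal[OF s])
  fix J assume J: "ideal A J \<and> J \<noteq> {\<zero>}"
  then obtain j where j: "j \<in> J" "j \<noteq> \<zero>"
    using idealD(3) by blast
  have jC: "j \<in> carr"
    using ideal_subset J j by blast
  have ej: "emb j \<in> S.carr" "emb j \<noteq> lzero S"
    using emb_closed jC emb_eq_zero_iff j by auto
  have brackets: "a \<star> j \<in> colon_ideal s \<inter> J" "j \<star> a \<in> colon_ideal s \<inter> J" if a: "a \<in> colon_ideal s" for a
  proof -
    have "a \<in> carr"
      using colon_ideal_subset[OF a] .
    then show "a \<star> j \<in> colon_ideal s \<inter> J" "j \<star> a \<in> colon_ideal s \<inter> J"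
      using colon_ideal_bracket[OF s a jC] idealD(6,7)[of J j a] J j(1) by auto
  qed
  from ej(1) s ej(2) show "colon_ideal s \<inter> J \<noteq> {\<zero>}"
  proof (cases rule: alg_of_quotientsE)
    case (1 a)
    then show ?thesis
      using brackets(1)[OF 1(1)] emb_bracket[OF colon_ideal_subset jC] emb_zero by force
  next
    case (2 a)
    then show ?thesis
      using brackets(2)[OF 2(1)] emb_bracket[OF jC colon_ideal_subset] emb_zero by force
  qed
qed

definition psi_rep where "psi_rep s x = emb_inv (lbr S (emb x) s)"

lemma psi_qclass: "psi A S emb s = cls (psi_rep s) (colon_ideal s)"
  unfolding psi_def colon_ideal_def emb_inv_def psi_rep_def[abs_def] ..

lemma psi_rep_closed: "s \<in> S.carr \<Longrightarrow> x \<in> colon_ideal s \<Longrightarrow> psi_rep s x \<in> carr"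
  and emb_psi_rep: "s \<in> S.carr \<Longrightarrow> x \<in> colon_ideal s \<Longrightarrow> emb (psi_rep s x) = lbr S (emb x) s"
  unfolding psi_rep_def using gen_sub_self colon_ideal_iff emb_inv_closed emb_emb_inv by blast+

lemma Qpairs_psi:
  assumes s: "s \<in> S.carr"
  shows "(psi_rep s, colon_ideal s) \<in> QP"
  unfolding Qpairs_iff PDer_def
proof (intro conjI ballI allI essential_colon_ideal[OF s])
  note D = colon_ideal_ideal[OF s]
  fix x assume x: "x \<in> colon_ideal s"
  have C: "x \<in> carr" "emb x \<in> S.carr" "psi_rep s x \<in> carr"
    using x colon_ideal_subset emb_closed psi_rep_closed[OF s] by auto
  show "psi_rep s x \<in> carr"
    using C(3) .
  fix c
  have "emb (psi_rep s (c \<odot> x)) = emb (c \<odot> psi_rep s x)"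
    using emb_psi_rep[OF s idealD(5)[OF D x]] emb_psi_rep[OF s x] emb_smul C s
    by (simp add: S.bracket_smul_left)
  then show "psi_rep s (c \<odot> x) = c \<odot> psi_rep s x"
    using emb_inj psi_rep_closed[OF s idealD(5)[OF D x]] C(3) by simp
next
  note D = colon_ideal_ideal[OF s]
  fix x y assume x: "x \<in> colon_ideal s" and y: "y \<in> colon_ideal s"
  have C: "x \<in> carr" "y \<in> carr" "emb x \<in> S.carr" "emb y \<in> S.carr"
    "psi_rep s x \<in> carr" "psi_rep s y \<in> carr"
    using x y colon_ideal_subset emb_closed psi_rep_closed[OF s] by auto
  have xy: "x \<oplus> y \<in> colon_ideal s" "x \<star> y \<in> colon_ideal s"
    using idealD(4,6)[OF D] x y C by auto
  have "emb (psi_rep s (x \<oplus> y)) = emb (psi_rep s x \<oplus> psi_rep s y)"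
    using emb_psi_rep[OF s xy(1)] emb_psi_rep[OF s x] emb_psi_rep[OF s y] emb_add C s
    by (simp add: S.bracket_add_left)
  then show "psi_rep s (x \<oplus> y) = psi_rep s x \<oplus> psi_rep s y"
    using emb_inj psi_rep_closed[OF s xy(1)] C by simp
  have "emb (psi_rep s (x \<star> y))
      = ladd S (lbr S (emb x) (lbr S (emb y) s)) (lbr S (lbr S (emb x) s) (emb y))"
    using emb_psi_rep[OF s xy(2)] emb_bracket C S.right_mult_derivation[OF C(3,4) s] by simp
  also have "\<dots> = emb (psi_rep s x \<star> y \<oplus> x \<star> psi_rep s y)"
    using emb_psi_rep[OF s x] emb_psi_rep[OF s y] emb_add emb_bracket C s by (simp add: S.add_commute)
  finally show "psi_rep s (x \<star> y) = psi_rep s x \<star> y \<oplus> x \<star> psi_rep s y"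
    using emb_inj psi_rep_closed[OF s xy(2)] C by simp
qed

lemma psi_in_quotient: "s \<in> S.carr \<Longrightarrow> psi A S emb s \<in> QP // QR"
  unfolding psi_qclass by (rule qclass_in_quotient[OF Qpairs_psi])

lemma psi_add:
  assumes s: "s \<in> S.carr" and t: "t \<in> S.carr"
  shows "psi A S emb (ladd S s t) = qadd A (psi A S emb s) (psi A S emb t)"
proof -
  have st: "ladd S s t \<in> S.carr"
    using s t by simp
  have "psi_rep (ladd S s t) x = psi_rep s x \<oplus> psi_rep t x"
    if x: "x \<in> colon_ideal (ladd S s t)" "x \<in> colon_ideal s" "x \<in> colon_ideal t" for x
    using emb_psi_rep[OF st x(1)] emb_psi_rep[OF s x(2)] emb_psi_rep[OF t x(3)]
      psi_rep_closed[OF st x(1)] psi_rep_closed[OF s x(2)] psi_rep_closed[OF t x(3)]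
      emb_add emb_closed[OF colon_ideal_subset[OF x(2)]] s t
    by (intro emb_inj) (simp_all add: S.bracket_add_right)
  then show ?thesis
    unfolding psi_qclass qadd_qclass[OF Qpairs_psi[OF s] Qpairs_psi[OF t]]
    using qclass_eq_iff[OF Qpairs_psi[OF st] Qpairs_add[OF Qpairs_psi[OF s] Qpairs_psi[OF t]]] by simp
qed

lemma psi_smul:
  assumes s: "s \<in> S.carr"
  shows "psi A S emb (lsmul S c s) = qsmul A c (psi A S emb s)"
proof -
  have cs: "lsmul S c s \<in> S.carr"
    using s by simp
  have "psi_rep (lsmul S c s) x = psi_rep s (c \<odot> x)"
    if x: "x \<in> colon_ideal (lsmul S c s)" "x \<in> colon_ideal s" for x
  proof -
    have cx: "c \<odot> x \<in> colon_ideal s"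
      using idealD(5)[OF colon_ideal_ideal[OF s] x(2)] .
    show ?thesis
      using emb_psi_rep[OF cs x(1)] emb_psi_rep[OF s cx] psi_rep_closed[OF cs x(1)] psi_rep_closed[OF s cx]
        emb_smul emb_closed[OF colon_ideal_subset[OF x(2)]] colon_ideal_subset[OF x(2)] s
      by (intro emb_inj) (simp_all add: S.bracket_smul_left S.bracket_smul_right)
  qed
  then show ?thesis
    unfolding psi_qclass qsmul_qclass[OF Qpairs_psi[OF s]]
    using qclass_eq_iff[OF Qpairs_psi[OF cs] Qpairs_smul[OF Qpairs_psi[OF s]]] by simp
qed

lemma psi_bracket:
  assumes s: "s \<in> S.carr" and t: "t \<in> S.carr"
  shows "psi A S emb (lbr S s t) = qbr A (psi A S emb s) (psi A S emb t)"
proof -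
  have st: "lbr S s t \<in> S.carr"
    using s t by simp
  have "psi_rep (lbr S s t) x = pder_bracket (psi_rep s) (psi_rep t) x"
    if x: "x \<in> colon_ideal (lbr S s t)" "x \<in> isq A (colon_ideal s \<inter> colon_ideal t)" for x
  proof -
    have into: "x \<in> colon_ideal s \<inter> colon_ideal t" "psi_rep s x \<in> colon_ideal s \<inter> colon_ideal t"
      "psi_rep t x \<in> colon_ideal s \<inter> colon_ideal t"
      using Qpairs_isq_into[OF Qpairs_psi[OF s] Qpairs_psi[OF t] x(2)] by auto
    have C: "psi_rep t (psi_rep s x) \<in> carr" "psi_rep s (psi_rep t x) \<in> carr"
      using psi_rep_closed s t into by auto
    have "emb (pder_bracket (psi_rep s) (psi_rep t) x)
        = lsub S (lbr S (lbr S (emb x) s) t) (lbr S (lbr S (emb x) t) s)"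
      using emb_psi_rep s t into C by (simp add: lsub_def emb_add emb_smul)
    also have "\<dots> = emb (psi_rep (lbr S s t) x)"
      using S.leibniz_identity[OF emb_closed s t] emb_psi_rep[OF st x(1)] colon_ideal_subset[OF x(1)]
      by simp
    finally show ?thesis
      using emb_inj C psi_rep_closed[OF st x(1)] by simp
  qed
  then show ?thesis
    unfolding psi_qclass qbr_qclass[OF Qpairs_psi[OF s] Qpairs_psi[OF t]]
    using qclass_eq_iff[OF Qpairs_psi[OF st] Qpairs_bracket[OF Qpairs_psi[OF s] Qpairs_psi[OF t]]] by simp
qed

lemma psi_emb:
  assumes x: "x \<in> carr"
  shows "psi A S emb (emb x) = phi A x"
proof -
  have "psi_rep (emb x) y = y \<star> x" if "y \<in> colon_ideal (emb x)" for y
    using emb_bracket[OF colon_ideal_subset[OF that] x, symmetric] emb_inv_emb colon_ideal_subset[OF that] x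
    by (simp add: psi_rep_def)
  then show ?thesis
    unfolding psi_qclass phi_qclass
    using qclass_eq_iff[OF Qpairs_psi[OF emb_closed[OF x]] Qpairs_right_mult[OF x]] by simp
qed

text \<open>In either case of the quotient property the element \<open>[emb a, p]\<close> (resp. \<open>[p, emb a]\<close>)
  lies in \<open>E\<close> and is itself annihilated by the essential ideal, hence vanishes.\<close>

lemma colon_bracket_left_annihilated:
  assumes p: "p \<in> S.carr" and K: "essential A K" and ann: "\<And>k. k \<in> K \<Longrightarrow> lbr S (emb k) p = lzero S"
    and a: "a \<in> colon_ideal p"
  shows "lbr S (emb a) p = lzero S"
proof -
  have aC: "a \<in> carr" "emb a \<in> S.carr"
    using colon_ideal_subset[OF a] emb_closed by auto
  have kC: "k \<in> carr" "emb k \<in> S.carr" if "k \<in> K" for k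
    using that essential_subset[OF K] emb_closed by blast+
  let ?b = "psi_rep p a"
  have b: "?b \<in> carr" "emb ?b = lbr S (emb a) p"
    using psi_rep_closed[OF p a] emb_psi_rep[OF p a] by auto
  have "?b \<star> k = \<zero>" if k: "k \<in> K" for k
  proof -
    have "lbr S (emb a) (lbr S p (emb k)) = lzero S"
      using S.bracket_right_antisym[OF aC(2) p kC(2)[OF k]] ann[OF k] aC(2) p kC(2)[OF k] by simp
    moreover have "lbr S (lbr S (emb a) (emb k)) p = lzero S"
      using ann[OF idealD(7)[OF essential_ideal[OF K] k aC(1)]] emb_bracket[OF aC(1) kC(1)[OF k]] by simp
    ultimately show ?thesis
      using emb_bracket[OF b(1) kC(1)[OF k]] b(2) S.right_mult_derivation[OF aC(2) p kC(2)[OF k]]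
        emb_eq_zero_iff[OF bracket_closed[OF b(1) kC(1)[OF k]]] by simp
  qed
  then have "?b = \<zero>"
    using essential_annihilator_trivial[OF K b(1)] by blast
  then show ?thesis
    using b(2) emb_zero by simp
qed

lemma colon_bracket_right_annihilated:
  assumes p: "p \<in> S.carr" and K: "essential A K" and ann: "\<And>k. k \<in> K \<Longrightarrow> lbr S (emb k) p = lzero S"
    and a: "a \<in> colon_ideal p"
  shows "lbr S p (emb a) = lzero S"
proof -
  have aC: "a \<in> carr" "emb a \<in> S.carr"
    using colon_ideal_subset[OF a] emb_closed by auto
  have kC: "k \<in> carr" "emb k \<in> S.carr" if "k \<in> K" for k
    using that essential_subset[OF K] emb_closed by blast+
  have "lbr S p (emb a) \<in> E"
    using a gen_sub_self[OF p] colon_ideal_iff by blast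
  then obtain b where b_eq: "lbr S p (emb a) = emb b" and b: "b \<in> carr"
    by (rule imageE)
  have "k \<star> b = \<zero>" if k: "k \<in> K" for k
  proof -
    have "lbr S (emb k) (lbr S (emb a) p) = lzero S"
      using S.leibniz_identity[OF kC(2)[OF k] aC(2) p] ann[OF k]
        ann[OF idealD(6)[OF essential_ideal[OF K] k aC(1)]] emb_bracket[OF kC(1)[OF k] aC(1)] aC(2)
      by simp
    then show ?thesis
      using S.bracket_right_antisym[OF kC(2)[OF k] p aC(2)] emb_bracket[OF kC(1)[OF k] b] b_eq
        kC(2)[OF k] aC(2) p emb_closed[OF b] emb_eq_zero_iff[OF bracket_closed[OF kC(1)[OF k] b]] by simp
  qed
  then have "b = \<zero>"
    using essential_annihilator_trivial'[OF K b] by blast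
  then show ?thesis
    using b_eq emb_zero by simp
qed

lemma annihilated_by_essential_zero:
  assumes p: "p \<in> S.carr" and K: "essential A K" and ann: "\<And>k. k \<in> K \<Longrightarrow> lbr S (emb k) p = lzero S"
  shows "p = lzero S"
proof (rule ccontr)
  assume "p \<noteq> lzero S"
  with p p show False
    using colon_bracket_left_annihilated[OF p K ann] colon_bracket_right_annihilated[OF p K ann]
    by (cases rule: alg_of_quotientsE) blast+
qed

lemma psi_inj:
  assumes s: "s \<in> S.carr" and t: "t \<in> S.carr" and eq: "psi A S emb s = psi A S emb t"
  shows "s = t"
proof -
  have "lbr S (emb k) (lsub S s t) = lzero S" if k: "k \<in> colon_ideal s" "k \<in> colon_ideal t" for k
  proof -
    have "psi_rep s k = psi_rep t k"
      using eq qclass_eq_iff[OF Qpairs_psi[OF s] Qpairs_psi[OF t]] k by (simp add: psi_qclass)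
    then have "lbr S (emb k) s = lbr S (emb k) t"
      using emb_psi_rep[OF s k(1)] emb_psi_rep[OF t k(2)] by simp
    then show ?thesis
      using S.bracket_diff_right[OF emb_closed[OF colon_ideal_subset[OF k(1)]] s t] s t
        emb_closed[OF colon_ideal_subset[OF k(1)]] by simp
  qed
  then have "lsub S s t = lzero S"
    using annihilated_by_essential_zero[OF _ essential_Int[OF essential_colon_ideal[OF s] essential_colon_ideal[OF t]]]
      s t by simp
  then show ?thesis
    using S.diff_eq_zero_imp_eq s t by blast
qed

lemma psi_monomorphism: "lmono S Q (psi A S emb)"
  unfolding lmono_def lhom_def Qalg_simps inj_on_def
  using psi_in_quotient psi_add psi_smul psi_bracket psi_inj by auto

end

theorem proposition4p6:
  fixes L :: "('f::field, 'a) lalg"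
  assumes "leibniz L" and "semiprime L"
  shows "leibniz (Qalg L) \<and> semiprime (Qalg L) \<and>
         alg_of_quotients (Qalg L) (phi L ` lcar L) \<and>
         (\<forall>(S :: ('f, 's) lalg) (emb :: 'a \<Rightarrow> 's).
            lmono L S emb \<and> alg_of_quotients S (emb ` lcar L) \<longrightarrow>
              lmono S (Qalg L) (psi L S emb) \<and>
              (\<forall>x\<in>lcar L. psi L S emb (emb x) = phi L x))"
proof -
  interpret semiprime_leibniz_algebra L
    using assms by unfold_locales
  have "lmono S (Qalg L) (psi L S emb) \<and> (\<forall>x\<in>lcar L. psi L S emb (emb x) = phi L x)"
    if "lmono L S emb" "alg_of_quotients S (emb ` lcar L)" for S :: "('f, 's) lalg" and emb
  proof -
    interpret quotient_algebra_embedding L S emb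
      using that by unfold_locales
    show ?thesis
      using psi_monomorphism psi_emb by blast
  qed
  then show ?thesis
    using Q_leibniz Q_semiprime Q_alg_of_quotients by blast
qed

end
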